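(* Let $P,p,\kappa\in\mathbb{C}\setminus\{0\}$ and let $\sum_{k\ge0}y^kA_k(x)$ be a formal solution of $(\ddagger)$ with all $A_k$ rational in $x$ and $A_0\not\equiv0$. Then $A_0\equiv q$ for some constant $q\in\mathbb{C}\setminus\{0\}$ (the general solution of the equation for $A_0$ being $q\exp(-3c/(2x^{2/3}))$), $A_1(x)\equiv\dfrac{8p^2(q^3-1)}{3P^2\kappa^2q}$, and for every $k\in\mathbb{N}$, $A_k$ is an even polynomial in $x$ of degree at most $2(N_k+1)$, where $N_k=\lfloor 2(k-1)/3\rfloor$. The coefficients of $x^{2m}$, $0\le m\le N_k$, in $A_k$ are uniquely determined by $q$ and the lower-order data, while the coefficient of $x^{2(N_k+1)}$ is zero when $k\equiv1\pmod 3$ and is an arbitrary complex constant otherwise. Moreover, $A_k$ satisfies the linear ODE $$P^{2k}\kappa^{2k}q^{2k-1}\Big(9x^2A_k''-3(8k-5)xA_k'+8k(2k-1)A_k\Big)=R_k(x),$$ where $R_k$ is an even polynomial in $x$ of degree at most $2N_k$ determined by $A_0,\dots,A_{k-1}$.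
   Context: Fix $P,p,\kappa\in\mathbb{C}\setminus\{0\}$. Define the differential operator $$D=\frac{iP}{x^2y}\frac{\partial}{\partial y}-\Big(\frac{x}{2}+\frac{iP}{xy^2}\Big(1+\frac{\kappa^2(y^2-1)}{4(4y+\kappa^2(y-1)^2)}\Big)\Big)\frac{\partial}{\partial x},$$ and let $(\ddagger)$ be the PDE $$D^2\ln A=-\frac{p^2}{3x^4y^4\big(1+\kappa^2(y-1)^2/(4y)\big)}\Big(A-\frac{1}{A^2}\Big).$$ A series $\sum_ky^kA_k(x)$ with coefficients rational in $x$ is a formal solution if after substitution into $(\ddagger)$ (with $D^2\ln A=(A\,D^2A-(DA)^2)/A^2$, denominators cleared) and expansion in powers of $y$ all coefficients vanish identically. *)

theory Defs
  imports "HOL-Computational_Algebra.Computational_Algebra" "HOL-Computational_Algebra.Field_as_Ring"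
begin

type_synonym ratfun = "complex poly fract"

definition rcst :: "complex \<Rightarrow> ratfun" where
  "rcst c = to_fract [:c:]"

definition rX :: ratfun where
  "rX = to_fract [:0, 1:]"

definition rderiv :: "ratfun \<Rightarrow> ratfun" where
  "rderiv r = (case quot_of_fract r of (a, b) \<Rightarrow>
                 Fract (pderiv a * b - a * pderiv b) (b * b))"

text \<open>Coefficient of x^n of a rational function (meaningful when it is a polynomial).\<close>
definition xcoeff :: "ratfun \<Rightarrow> nat \<Rightarrow> complex" where
  "xcoeff r n = coeff (fst (quot_of_fract r)) n"

text \<open>Formal Laurent series in y with rational-function coefficients;
  partial derivative in x acts coefficientwise, partial derivative in y is fls_deriv.\<close>
definition xderiv :: "ratfun fls \<Rightarrow> ratfun fls" where
  "xderiv F = Abs_fls (\<lambda>n. rderiv (fls_nth F n))"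

abbreviation (input) kc :: "complex \<Rightarrow> ratfun fls" where
  "kc c \<equiv> fls_const (rcst c)"

abbreviation (input) xx :: "ratfun fls" where
  "xx \<equiv> fls_const rX"

abbreviation (input) yy :: "ratfun fls" where
  "yy \<equiv> fls_X"

definition opD :: "complex \<Rightarrow> complex \<Rightarrow> ratfun fls \<Rightarrow> ratfun fls" where
  "opD P \<kappa> F =
     (kc (\<i> * P) / (xx^2 * yy)) * fls_deriv F
     - (xx / 2 + (kc (\<i> * P) / (xx * yy^2)) *
          (1 + kc (\<kappa>^2) * (yy^2 - 1) / (4 * (4 * yy + kc (\<kappa>^2) * (yy - 1)^2))))
       * xderiv F"

text \<open>Formal solution of the PDE: D^2 ln A = (A D^2 A - (D A)^2)/A^2 = RHS (A - 1/A^2),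
  with the denominator A^2 cleared, i.e. A D^2A - (DA)^2 = RHS (A^3 - 1), as an identity
  of formal Laurent series in y over the field of rational functions in x
  (all coefficients of all powers of y vanish).\<close>
definition formal_sol :: "complex \<Rightarrow> complex \<Rightarrow> complex \<Rightarrow> ratfun fps \<Rightarrow> bool" where
  "formal_sol P p \<kappa> A \<longleftrightarrow>
     (let S = fps_to_fls A in
        S * opD P \<kappa> (opD P \<kappa> S) - (opD P \<kappa> S)^2 =
        - kc (p^2) / (3 * xx^4 * yy^4 * (1 + kc (\<kappa>^2) * (yy - 1)^2 / (4 * yy)))
          * (S^3 - 1))"

definition Nk :: "nat \<Rightarrow> nat" where
  "Nk k = (2 * (k - 1)) div 3"

definition even_poly_le :: "complex poly \<Rightarrow> nat \<Rightarrow> bool" where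
  "even_poly_le a d \<longleftrightarrow> degree a \<le> d \<and> (\<forall>j. odd j \<longrightarrow> coeff a j = 0)"

end

theory Submission
  imports Defs
begin

text \<open>
  Clearing denominators turns the PDE into a polynomial identity \<open>\<E>(A) = 0\<close> in \<open>y\<close> whose
  coefficients are polynomials in \<open>x\<close>. Giving \<open>x\<^sup>n y\<^sup>k\<close> the weight \<open>3n - 4k\<close>, \<open>\<E>\<close> maps series of
  weight \<open>\<le> 0\<close> to series of weight \<open>\<le> -12\<close>.

  The coefficient of \<open>y\<^sup>2\<close> of \<open>\<E>(A)\<close> only involves \<open>A\<^sub>0\<close> and forces it to be a constant \<open>q\<close>. For
  \<open>m \<ge> 1\<close> the coefficient of \<open>y\<^sup>m\<^sup>+\<^sup>2\<close> reads \<open>C L\<^sub>m(A\<^sub>m) = -R\<^sub>m\<close> with \<open>C \<noteq> 0\<close>, where \<open>R\<^sub>m\<close> only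
  depends on \<open>A\<^sub>0, \<dots>, A\<^sub>m\<^sub>-\<^sub>1\<close> and the Euler operator \<open>L\<^sub>m = 9x\<^sup>2\<partial>\<^sup>2 - 3(8m - 5)x\<partial> + 8m(2m - 1)\<close>
  multiplies \<open>x\<^sup>n\<close> by \<open>(3n - 4m)(3n - 4m + 2)\<close>. By induction \<open>R\<^sub>m\<close> is an even polynomial of weight
  \<open>\<le> -12\<close>, on which \<open>L\<^sub>m\<close> is invertible, while the rational kernel of \<open>L\<^sub>m\<close> is spanned by the
  \<open>x\<^sup>n\<close> with \<open>3n \<in> {4m, 4m - 2}\<close>; such an \<open>n\<close> is the even number \<open>2(N\<^sub>m + 1)\<close> exactly when
  \<open>m mod 3 \<noteq> 1\<close>.
\<close>

section \<open>Derivatives of rational functions\<close>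

lemma rderiv_Fract:
  assumes b: "b \<noteq> 0"
  shows "rderiv (Fract a b) = Fract (pderiv a * b - a * pderiv b) (b * b)"
proof -
  obtain a0 b0 where q: "quot_of_fract (Fract a b) = (a0, b0)" by (cases "quot_of_fract (Fract a b)")
  have b0: "b0 \<noteq> 0" using snd_quot_of_fract_nonzero[of "Fract a b"] q by simp
  have "Fract a0 b0 = Fract a b" using Fract_quot_of_fract[of "Fract a b"] q by simp
  hence e1: "a * b0 = a0 * b" using b b0 by (simp add: eq_fract)
  hence "pderiv (a * b0) = pderiv (a0 * b)" by simp
  hence e2: "pderiv a * b0 = pderiv a0 * b + a0 * pderiv b - a * pderiv b0"
    by (simp add: pderiv_mult algebra_simps)
  have "(pderiv a * b - a * pderiv b) * (b0 * b0) = (pderiv a * b0) * b * b0 - (a * b0) * pderiv b * b0"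
    by (simp add: algebra_simps)
  also have "\<dots> = (pderiv a0 * b + a0 * pderiv b - a * pderiv b0) * b * b0 - (a0 * b) * pderiv b * b0"
    by (simp only: e1 e2)
  also have "\<dots> = (pderiv a0 * b0 - a0 * pderiv b0) * (b * b)"
    by (simp add: e1 algebra_simps)
  finally show ?thesis using b b0 q by (simp add: rderiv_def eq_fract)
qed

lemma rderiv_to_fract [simp]: "rderiv (to_fract p) = to_fract (pderiv p)"
  by (simp add: to_fract_def rderiv_Fract)

lemma rderiv_0 [simp]: "rderiv 0 = 0"
  using rderiv_to_fract[of 0] by simp

lemma rderiv_1 [simp]: "rderiv 1 = 0"
  using rderiv_to_fract[of 1] by simp

lemma rderiv_add [simp]: "rderiv (r + s) = rderiv r + rderiv s"
  by (cases r; cases s) (simp add: rderiv_Fract pderiv_add pderiv_mult eq_fract algebra_simps)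

lemma rderiv_mult [simp]: "rderiv (r * s) = rderiv r * s + r * rderiv s"
  by (cases r; cases s) (simp add: rderiv_Fract pderiv_add pderiv_mult eq_fract algebra_simps)

lemma rderiv_uminus [simp]: "rderiv (- r) = - rderiv r"
  using rderiv_add[of r "- r"] by (simp add: eq_neg_iff_add_eq_0 add.commute)

lemma rderiv_diff [simp]: "rderiv (r - s) = rderiv r - rderiv s"
  using rderiv_add[of r "- s"] by simp

lemma rderiv_sum: "rderiv (sum f A) = (\<Sum>i\<in>A. rderiv (f i))"
  by (induction A rule: infinite_finite_induct) simp_all

lemma rderiv_divide:
  assumes "s \<noteq> 0"
  shows "rderiv (r / s) = (rderiv r * s - r * rderiv s) / s^2"
proof -
  have "rderiv r = rderiv (r / s) * s + (r / s) * rderiv s"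
    using rderiv_mult[of "r / s" s] assms by simp
  thus ?thesis using assms by (simp add: field_simps power2_eq_square)
qed

lemma rderiv_of_nat [simp]: "rderiv (of_nat n) = 0"
proof -
  have "(of_nat n :: ratfun) = to_fract (of_nat n)" by (induction n) simp_all
  thus ?thesis by simp
qed

lemma rderiv_numeral [simp]: "rderiv (numeral n) = 0"
  using rderiv_of_nat[of "numeral n"] by simp

lemma rcst_0 [simp]: "rcst 0 = 0"
  by (simp add: rcst_def)

lemma rcst_1 [simp]: "rcst 1 = 1"
  by (metis rcst_def to_fract_1 one_pCons)

lemma rcst_add [simp]: "rcst (a + b) = rcst a + rcst b"
  by (simp add: rcst_def flip: to_fract_add)

lemma rcst_diff [simp]: "rcst (a - b) = rcst a - rcst b"
  by (simp add: rcst_def flip: to_fract_diff)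

lemma rcst_uminus [simp]: "rcst (- a) = - rcst a"
  by (simp add: rcst_def flip: to_fract_uminus)

lemma rcst_mult [simp]: "rcst (a * b) = rcst a * rcst b"
  by (simp add: rcst_def flip: to_fract_mult)

lemma rcst_power [simp]: "rcst (a ^ n) = rcst a ^ n"
  by (induction n) simp_all

lemma rcst_of_nat [simp]: "rcst (of_nat n) = of_nat n"
  by (induction n) simp_all

lemma rcst_numeral [simp]: "rcst (numeral n) = numeral n"
  using rcst_of_nat[of "numeral n"] by simp

lemma rcst_eq_0_iff [simp]: "rcst a = 0 \<longleftrightarrow> a = 0"
  by (simp add: rcst_def)

lemma ratfun_numeral_nonzero [simp]: "(numeral n :: ratfun) \<noteq> 0"
  using rcst_eq_0_iff[of "numeral n"] by (simp del: rcst_eq_0_iff)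

lemma rcst_divide: "b \<noteq> 0 \<Longrightarrow> rcst (a / b) = rcst a / rcst b"
  by (simp add: eq_divide_eq flip: rcst_mult)

lemma rderiv_rcst [simp]: "rderiv (rcst c) = 0"
  by (simp add: rcst_def)

lemma rderiv_rcst_power [simp]: "rderiv (rcst c ^ n) = 0"
  by (metis rcst_power rderiv_rcst)

lemma rderiv_rX [simp]: "rderiv rX = 1"
  by (simp add: rX_def pderiv_pCons one_pCons[symmetric] del: one_pCons)

lemma rX_nonzero [simp]: "rX \<noteq> 0"
  by (simp add: rX_def)

lemma to_fract_smult: "to_fract (smult a q) = rcst a * to_fract q"
  unfolding rcst_def to_fract_mult[symmetric] by simp

lemma to_fract_power: "to_fract (q ^ n) = to_fract q ^ n"
  by (induction n) simp_all

lemma to_fract_x_mult: "to_fract ([:0, 1:] * q) = rX * to_fract q"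
  by (simp only: to_fract_mult rX_def)

lemma to_fract_x2_mult: "to_fract ([:0, 0, 1:] * q) = rX ^ 2 * to_fract q"
proof -
  have "[:0, 0, 1:] * q = [:0, 1:] * ([:0, 1:] * q)" by simp
  thus ?thesis by (simp only: to_fract_x_mult power2_eq_square mult.assoc)
qed

lemma to_fract_monom: "to_fract (monom c n) = rcst c * rX ^ n"
  by (simp add: monom_altdef to_fract_smult to_fract_power rX_def)

lemma xcoeff_to_fract [simp]: "xcoeff (to_fract a) n = coeff a n"
  by (simp add: xcoeff_def)

lemma coeff_x_pderiv: "coeff ([:0, 1:] * pderiv (p :: complex poly)) n = of_nat n * coeff p n"
  by (cases n) (simp_all add: coeff_pderiv)

lemma coeff_x2_pderiv2:
  "coeff ([:0, 0, 1:] * pderiv (pderiv (p :: complex poly))) n = of_nat n * (of_nat n - 1) * coeff p n"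
  by (cases n; cases "n - 1") (auto simp: coeff_pderiv algebra_simps)

lemma x_pderiv_eq_smult_imp_monom:
  fixes u :: "complex poly"
  assumes eq: "[:0, 1:] * pderiv u = smult c u" and u: "u \<noteq> 0"
  shows "u = monom (lead_coeff u) (degree u)" and "c = of_nat (degree u)"
proof -
  have cu: "(of_nat n - c) * coeff u n = 0" for n
    using arg_cong[OF eq, of "\<lambda>p. coeff p n"] unfolding coeff_x_pderiv coeff_smult
    by (simp add: algebra_simps)
  show c: "c = of_nat (degree u)" using cu[of "degree u"] u by simp
  have "coeff u n = 0" if "n \<noteq> degree u" for n using cu[of n] that by (simp add: c)
  thus "u = monom (lead_coeff u) (degree u)" by (intro poly_eqI) (auto simp: coeff_monom)
qed

lemma x_pderiv_eigen_of_coprime: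
  fixes u v :: "complex poly"
  assumes cop: "coprime v u" and v: "v \<noteq> 0"
    and eq: "[:0, 1:] * (pderiv u * v - u * pderiv v) = smult \<beta> u * v"
  obtains l where "[:0, 1:] * pderiv v = smult l v" and "[:0, 1:] * pderiv u = smult (l + \<beta>) u"
proof -
  define x :: "complex poly" where "x = [:0, 1:]"
  have E: "x * (pderiv u * v - u * pderiv v) = smult \<beta> u * v" using eq by (simp only: x_def)
  have "u * (x * pderiv v) = v * (x * pderiv u - smult \<beta> u)"
    using E by (simp add: algebra_simps)
  hence "v dvd x * pderiv v"
    using coprime_dvd_mult_right_iff[OF cop] by (metis dvd_triv_left)
  then obtain s where s: "x * pderiv v = v * s" by (elim dvdE)
  have "degree (v * s) \<le> degree v"
    unfolding s[symmetric] x_def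
    by (cases "pderiv v = 0") (auto simp: degree_pderiv pderiv_eq_0_iff)
  hence "degree s = 0" using v by (cases "s = 0") (simp_all add: degree_mult_eq)
  then obtain l where "s = [:l:]" using degree0_coeffs by blast
  hence hv: "x * pderiv v = smult l v" using s by simp
  have "x * pderiv u * v = smult (l + \<beta>) u * v"
    using E hv by (simp add: algebra_simps smult_add_left)
  hence "x * pderiv u = smult (l + \<beta>) u" using v by (metis mult_right_cancel)
  with hv show ?thesis using that unfolding x_def by blast
qed

lemma x_rderiv_eq_imp_monomial:
  assumes eq: "rX * rderiv r = rcst \<beta> * r" and r: "r \<noteq> 0"
  obtains c j d where "r * rX ^ d = rcst c * rX ^ j" and "\<beta> = of_nat j - of_nat d"
proof -
  define u where "u = fst (quot_of_fract r)"
  define v where "v = snd (quot_of_fract r)"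
  have r_eq: "r = Fract u v" by (simp add: u_def v_def)
  have v: "v \<noteq> 0" by (simp add: v_def)
  have u: "u \<noteq> 0" using r by (simp add: u_def)
  have cop: "coprime v u" using coprime_quot_of_fract[of r] by (simp add: u_def v_def coprime_commute)
  define x :: "complex poly" where "x = [:0, 1:]"
  have "rX * rderiv r = Fract (x * (pderiv u * v - u * pderiv v)) (v * v)"
    by (simp add: r_eq rderiv_Fract v rX_def to_fract_def x_def)
  moreover have "rcst \<beta> * r = Fract (smult \<beta> u) v" by (simp add: r_eq rcst_def to_fract_def)
  ultimately have "x * (pderiv u * v - u * pderiv v) * v = smult \<beta> u * (v * v)"
    using eq v by (simp add: eq_fract)
  hence "x * (pderiv u * v - u * pderiv v) = smult \<beta> u * v"
    using v by (metis (no_types, lifting) mult.assoc mult_right_cancel)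
  then obtain l where hv: "[:0, 1:] * pderiv v = smult l v" and hu: "[:0, 1:] * pderiv u = smult (l + \<beta>) u"
    using x_pderiv_eigen_of_coprime[OF cop v] unfolding x_def by blast
  define j d where "j = degree u" and "d = degree v"
  have um: "u = monom (lead_coeff u) j" and l\<beta>: "l + \<beta> = of_nat j"
    using x_pderiv_eq_smult_imp_monom[OF hu u] by (simp_all add: j_def)
  have vm: "v = monom (lead_coeff v) d" and l: "l = of_nat d"
    using x_pderiv_eq_smult_imp_monom[OF hv v] by (simp_all add: d_def)
  have "r * rX ^ d = Fract u v * to_fract (monom 1 d)"
    by (simp add: r_eq to_fract_monom)
  also have "\<dots> = Fract (monom (lead_coeff u / lead_coeff v) j) 1"
    using v by (simp add: to_fract_def, subst eq_fract) (simp_all, subst um, subst vm, simp add: mult_monom)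
  also have "\<dots> = rcst (lead_coeff u / lead_coeff v) * rX ^ j"
    by (simp add: to_fract_monom flip: to_fract_def)
  finally have "r * rX ^ d = rcst (lead_coeff u / lead_coeff v) * rX ^ j" .
  moreover have "\<beta> = of_nat j - of_nat d" using l\<beta> l by (simp add: algebra_simps)
  ultimately show ?thesis by (rule that)
qed

lemma rderiv_eq_0_imp_const:
  assumes "rderiv r = 0"
  obtains c where "r = rcst c"
proof (cases "r = 0")
  case False
  have "rX * rderiv r = rcst 0 * r" using assms by simp
  then obtain c j d where cjd: "r * rX ^ d = rcst c * rX ^ j" "(0::complex) = of_nat j - of_nat d"
    using x_rderiv_eq_imp_monomial False by blast
  from cjd(2) have "j = d" by simp
  with cjd(1) have "r = rcst c" by (simp add: mult_right_cancel)
  thus ?thesis by (rule that)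
next
  case True
  thus ?thesis using that[of 0] by simp
qed

section \<open>Euler operators\<close>

definition coeffwise_div :: "(nat \<Rightarrow> complex) \<Rightarrow> complex poly \<Rightarrow> complex poly" where
  "coeffwise_div w g = Abs_poly (\<lambda>n. coeff g n / w n)"

lemma coeff_coeffwise_div [simp]: "coeff (coeffwise_div w g) n = coeff g n / w n"
proof -
  have "coeff (coeffwise_div w g) = (\<lambda>n. coeff g n / w n)"
    unfolding coeffwise_div_def by (rule coeff_Abs_poly[of "degree g"]) (simp add: coeff_eq_0)
  thus ?thesis by simp
qed

definition euler1 :: "complex \<Rightarrow> ratfun \<Rightarrow> ratfun" where
  "euler1 \<alpha> r = rcst 3 * rX * rderiv r - rcst \<alpha> * r"

definition euler1_poly :: "complex \<Rightarrow> complex poly \<Rightarrow> complex poly" where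
  "euler1_poly \<alpha> q = smult 3 ([:0, 1:] * pderiv q) - smult \<alpha> q"

lemma coeff_euler1_poly: "coeff (euler1_poly \<alpha> q) n = (3 * of_nat n - \<alpha>) * coeff q n"
  unfolding euler1_poly_def coeff_diff coeff_smult coeff_x_pderiv by (simp add: algebra_simps)

lemma to_fract_euler1_poly: "to_fract (euler1_poly \<alpha> q) = euler1 \<alpha> (to_fract q)"
  unfolding euler1_poly_def euler1_def to_fract_diff to_fract_smult to_fract_x_mult
  by (simp add: mult.assoc)

lemma euler1_diff: "euler1 \<alpha> (r - s) = euler1 \<alpha> r - euler1 \<alpha> s"
  by (simp add: euler1_def algebra_simps)

lemma euler1_eq_0_imp_monomial:
  assumes hom: "euler1 \<alpha> r = 0" and "r \<noteq> 0"
  obtains c j d where "r * rX ^ d = rcst c * rX ^ j" and "\<alpha> = 3 * (of_nat j - of_nat d)"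
proof -
  have "rX * rderiv r = rcst (1 / 3 * 3) * (rX * rderiv r)" by simp
  also have "\<dots> = rcst (1 / 3) * (rcst 3 * rX * rderiv r)"
    by (simp only: rcst_mult mult.assoc)
  also have "\<dots> = rcst (\<alpha> / 3) * r"
    using hom by (simp add: euler1_def mult.assoc flip: rcst_mult)
  finally obtain c j d where "r * rX ^ d = rcst c * rX ^ j" "\<alpha> / 3 = of_nat j - of_nat d"
    using x_rderiv_eq_imp_monomial \<open>r \<noteq> 0\<close> by blast
  thus ?thesis using that by simp
qed

lemma euler1_eq_poly_imp_poly:
  assumes E: "euler1 (of_nat a) r = to_fract g"
      and G: "\<And>n. coeff g n \<noteq> 0 \<Longrightarrow> 3 * n \<noteq> a"
  obtains q where "r = to_fract q" and "\<And>n. coeff q n \<noteq> 0 \<Longrightarrow> coeff g n \<noteq> 0 \<or> 3 * n = a"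
proof -
  define p where "p = coeffwise_div (\<lambda>n. 3 * of_nat n - of_nat a) g"
  have "euler1_poly (of_nat a) p = g"
  proof (rule poly_eqI)
    fix n
    have "coeff g n \<noteq> 0 \<Longrightarrow> 3 * of_nat n - of_nat a \<noteq> (0 :: complex)"
      using G[of n] by (metis eq_iff_diff_eq_0 of_nat_eq_iff of_nat_mult of_nat_numeral)
    thus "coeff (euler1_poly (of_nat a) p) n = coeff g n"
      by (cases "coeff g n = 0") (simp_all add: coeff_euler1_poly p_def)
  qed
  moreover have "euler1 (of_nat a) (r - to_fract p) = to_fract g - to_fract (euler1_poly (of_nat a) p)"
    by (simp only: euler1_diff E to_fract_euler1_poly)
  ultimately have hom: "euler1 (of_nat a) (r - to_fract p) = 0" by simp
  have p_supp: "coeff p n \<noteq> 0 \<Longrightarrow> coeff g n \<noteq> 0" for n by (simp add: p_def)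
  show ?thesis
  proof (cases "r - to_fract p = 0")
    case True
    thus ?thesis using p_supp by (intro that[of p]) auto
  next
    case False
    obtain c j d where cjd: "(r - to_fract p) * rX ^ d = rcst c * rX ^ j"
        "of_nat a = 3 * (of_nat j - of_nat d :: complex)"
      using euler1_eq_0_imp_monomial[OF hom False] by blast
    have "of_nat (a + 3 * d) = (of_nat (3 * j) :: complex)"
      using cjd(2) by (simp add: algebra_simps)
    hence jd: "a + 3 * d = 3 * j" by (simp only: of_nat_eq_iff)
    have "(r - to_fract p) * rX ^ d = rcst c * rX ^ (j - d) * rX ^ d"
      using cjd(1) jd by (simp add: mult.assoc flip: power_add)
    hence "r - to_fract p = to_fract (monom c (j - d))" by (simp add: to_fract_monom)
    hence "r = to_fract (p + monom c (j - d))" by (simp add: algebra_simps)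
    moreover have "coeff (p + monom c (j - d)) n \<noteq> 0 \<Longrightarrow> coeff g n \<noteq> 0 \<or> 3 * n = a" for n
      using p_supp jd by (auto simp: coeff_monom split: if_splits)
    ultimately show ?thesis by (rule that)
  qed
qed

text \<open>\<open>w = xA'/A\<close> solves \<open>3xw' = -2w\<close>, whose nonzero solutions are multiples of \<open>x\<^sup>-\<^sup>2\<^sup>/\<^sup>3\<close>;
  so \<open>w = 0\<close>. This is where the non-rational solutions \<open>q exp(-3c/(2x\<^sup>2\<^sup>/\<^sup>3))\<close> are excluded.\<close>

lemma rderiv_eq_0_of_leading_ode:
  assumes eq: "A * (3 * rX * rderiv u + 2 * u) - 3 * u^2 = 0" and u: "u = rX * rderiv A" and A: "A \<noteq> 0"
  shows "rderiv A = 0"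
proof -
  define w where "w = u / A"
  have "euler1 (- 2) w = (A * (3 * rX * rderiv u + 2 * u) - 3 * u * (rX * rderiv A)) / A^2"
    unfolding euler1_def w_def using A by (simp add: rderiv_divide field_simps power2_eq_square)
  also have "\<dots> = 0" using eq by (simp add: u[symmetric] power2_eq_square)
  finally have hom: "euler1 (- 2) w = 0" .
  have "w = 0"
  proof (rule ccontr)
    assume "w \<noteq> 0"
    then obtain c j d where "(- 2 :: complex) = 3 * (of_nat j - of_nat d)"
      using euler1_eq_0_imp_monomial[OF hom] by blast
    hence "of_int (- 2) = (of_int (3 * (int j - int d)) :: complex)" by simp
    hence "(- 2 :: int) = 3 * (int j - int d)" by (simp only: of_int_eq_iff)
    thus False by presburger
  qed
  thus ?thesis using A by (simp add: w_def u)
qed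

definition euler2 :: "nat \<Rightarrow> ratfun \<Rightarrow> ratfun" where
  "euler2 m r = 9 * rX^2 * rderiv (rderiv r) - rcst (3 * (8 * of_nat m - 5)) * rX * rderiv r
     + rcst (8 * of_nat m * (2 * of_nat m - 1)) * r"

lemma euler1_euler1:
  "euler1 \<beta> (euler1 \<alpha> r)
     = 9 * rX^2 * rderiv (rderiv r) + rcst (9 - 3 * \<alpha> - 3 * \<beta>) * rX * rderiv r + rcst (\<alpha> * \<beta>) * r"
  by (simp add: euler1_def algebra_simps power2_eq_square)

lemma euler2_eq_euler1_euler1:
  assumes "m \<ge> 1"
  shows "euler2 m r = euler1 (of_nat (4 * m)) (euler1 (of_nat (4 * m - 2)) r)"
proof -
  have c1: "9 - 3 * of_nat (4 * m - 2) - 3 * of_nat (4 * m) = - (3 * (8 * of_nat m - 5) :: complex)"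
    and c2: "of_nat (4 * m - 2) * of_nat (4 * m) = (8 * of_nat m * (2 * of_nat m - 1) :: complex)"
    using assms by (simp_all add: of_nat_diff algebra_simps)
  show ?thesis unfolding euler1_euler1 euler2_def c1 c2 rcst_uminus by (simp add: algebra_simps)
qed

lemma euler2_add: "euler2 m (r + s) = euler2 m r + euler2 m s"
  by (simp add: euler2_def algebra_simps)

lemma euler2_eq_poly_imp_poly:
  assumes m: "m \<ge> 1" and E: "euler2 m r = to_fract g"
      and G: "\<And>n. coeff g n \<noteq> 0 \<Longrightarrow> 3 * n + 4 \<le> 4 * m"
  obtains a where "r = to_fract a"
    and "\<And>n. coeff a n \<noteq> 0 \<Longrightarrow> coeff g n \<noteq> 0 \<or> 3 * n = 4 * m \<or> 3 * n + 2 = 4 * m"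
proof -
  have "euler1 (of_nat (4 * m)) (euler1 (of_nat (4 * m - 2)) r) = to_fract g"
    using E euler2_eq_euler1_euler1[OF m] by simp
  moreover have "3 * n \<noteq> 4 * m" if "coeff g n \<noteq> 0" for n
    using G[OF that] by linarith
  ultimately obtain h where h: "euler1 (of_nat (4 * m - 2)) r = to_fract h"
    and h_supp: "\<And>n. coeff h n \<noteq> 0 \<Longrightarrow> coeff g n \<noteq> 0 \<or> 3 * n = 4 * m"
    by (rule euler1_eq_poly_imp_poly) auto
  have "3 * n \<noteq> 4 * m - 2" if "coeff h n \<noteq> 0" for n
  proof (cases "coeff g n = 0")
    case True
    thus ?thesis using h_supp[OF that] m by linarith
  next
    case False
    thus ?thesis using G[OF False] by linarith
  qed
  then obtain a where a: "r = to_fract a"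
    and a_supp: "\<And>n. coeff a n \<noteq> 0 \<Longrightarrow> coeff h n \<noteq> 0 \<or> 3 * n = 4 * m - 2"
    using euler1_eq_poly_imp_poly[OF h] by blast
  show ?thesis
  proof (rule that[OF a])
    fix n assume "coeff a n \<noteq> 0"
    then consider "coeff h n \<noteq> 0" | "3 * n = 4 * m - 2" using a_supp by blast
    thus "coeff g n \<noteq> 0 \<or> 3 * n = 4 * m \<or> 3 * n + 2 = 4 * m"
    proof cases
      case 1
      thus ?thesis using h_supp by blast
    next
      case 2
      thus ?thesis using m by linarith
    qed
  qed
qed

definition euler2_poly :: "nat \<Rightarrow> complex poly \<Rightarrow> complex poly" where
  "euler2_poly k a = smult 9 ([:0, 0, 1:] * pderiv (pderiv a))
                     - smult (3 * (8 * of_nat k - 5)) ([:0, 1:] * pderiv a)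
                     + smult (8 * of_nat k * (2 * of_nat k - 1)) a"

lemma to_fract_euler2_poly: "to_fract (euler2_poly k a) = euler2 k (to_fract a)"
  unfolding euler2_poly_def euler2_def to_fract_add to_fract_diff to_fract_smult
    to_fract_x_mult to_fract_x2_mult
  by (simp add: algebra_simps)

lemma coeff_euler2_poly:
  "coeff (euler2_poly k a) n = (3 * of_nat n - 4 * of_nat k) * (3 * of_nat n - 4 * of_nat k + 2) * coeff a n"
  unfolding euler2_poly_def coeff_add coeff_diff coeff_smult coeff_x2_pderiv2 coeff_x_pderiv
  by (simp add: algebra_simps)

lemma euler2_factor_eq_0_iff:
  "(3 * of_nat n - 4 * of_nat k) * (3 * of_nat n - 4 * of_nat k + 2) = (0 :: complex)
     \<longleftrightarrow> 3 * n = 4 * k \<or> 3 * n + 2 = 4 * k"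
proof -
  have "(3 * of_nat n - 4 * of_nat k) * (3 * of_nat n - 4 * of_nat k + 2)
      = (of_int ((3 * int n - 4 * int k) * (3 * int n - 4 * int k + 2)) :: complex)"
    by simp
  also have "\<dots> = 0 \<longleftrightarrow> 3 * int n - 4 * int k = 0 \<or> 3 * int n - 4 * int k + 2 = 0"
    by (simp only: of_int_eq_0_iff mult_eq_0_iff)
  finally show ?thesis by linarith
qed

lemma euler2_poly_monom_resonant:
  assumes "3 * n = 4 * k \<or> 3 * n + 2 = 4 * k"
  shows "euler2_poly k (monom c n) = 0"
proof (rule poly_eqI)
  fix i
  have "(3 * of_nat n - 4 * of_nat k) * (3 * of_nat n - 4 * of_nat k + 2) = (0 :: complex)"
    using assms euler2_factor_eq_0_iff by blast
  thus "coeff (euler2_poly k (monom c n)) i = coeff 0 i"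
    by (cases "i = n") (simp_all add: coeff_euler2_poly coeff_monom)
qed

definition euler2_poly_inv :: "nat \<Rightarrow> complex poly \<Rightarrow> complex poly" where
  "euler2_poly_inv k = coeffwise_div (\<lambda>n. (3 * of_nat n - 4 * of_nat k) * (3 * of_nat n - 4 * of_nat k + 2))"

lemma euler2_poly_inv:
  assumes "\<And>n. coeff g n \<noteq> 0 \<Longrightarrow> 3 * n + 4 \<le> 4 * k"
  shows "euler2_poly k (euler2_poly_inv k g) = g"
proof (rule poly_eqI)
  fix n
  show "coeff (euler2_poly k (euler2_poly_inv k g)) n = coeff g n"
    using euler2_factor_eq_0_iff[of n k] assms[of n]
    by (cases "coeff g n = 0") (simp_all add: coeff_euler2_poly euler2_poly_inv_def)
qed

text \<open>The monomial \<open>x\<^sup>n y\<^sup>k\<close> has weight \<open>3n - 4k\<close>; in \<open>weight_le w k c\<close> the polynomial \<open>c\<close> is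
  the coefficient of \<open>y\<^sup>k\<close>.\<close>

definition weight_le :: "int \<Rightarrow> nat \<Rightarrow> complex poly \<Rightarrow> bool" where
  "weight_le w k c \<longleftrightarrow> (\<forall>n. coeff c n \<noteq> 0 \<longrightarrow> even n \<and> 3 * int n - 4 * int k \<le> w)"

lemma weight_le_add: "weight_le w k c \<Longrightarrow> weight_le w k d \<Longrightarrow> weight_le w k (c + d)"
  unfolding weight_le_def by (metis add.right_neutral coeff_add)

lemma weight_le_sum:
  "finite A \<Longrightarrow> (\<And>i. i \<in> A \<Longrightarrow> weight_le w k (f i)) \<Longrightarrow> weight_le w k (\<Sum>i\<in>A. f i)"
  by (induction A rule: finite_induct) (simp_all add: weight_le_add, simp add: weight_le_def)

lemma weight_le_mult:
  assumes c: "weight_le w1 i c" and d: "weight_le w2 j d"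
  shows "weight_le (w1 + w2) (i + j) (c * d)"
  unfolding weight_le_def
proof (intro allI impI)
  fix n assume "coeff (c * d) n \<noteq> 0"
  then obtain l where l: "l \<in> {..n}" "coeff c l * coeff d (n - l) \<noteq> 0"
    unfolding coeff_mult using sum.not_neutral_contains_not_neutral by blast
  define m where "m = n - l"
  have nlm: "n = l + m" using l(1) by (simp add: m_def)
  have "coeff c l \<noteq> 0" "coeff d m \<noteq> 0" using l(2) by (auto simp: m_def)
  hence "even l" "even m" "3 * int l - 4 * int i \<le> w1" "3 * int m - 4 * int j \<le> w2"
    using c d by (auto simp: weight_le_def)
  thus "even n \<and> 3 * int n - 4 * int (i + j) \<le> w1 + w2"
    unfolding nlm by auto
qed

lemma weight_le_const: "weight_le 0 0 [:q:]"
  by (auto simp: weight_le_def coeff_pCons split: nat.splits)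

lemma euler2_weight_solution:
  assumes m: "m \<ge> 1" and C: "C \<noteq> 0"
    and eq: "rcst C * euler2 m r = - to_fract \<phi>" and \<phi>: "weight_le (- 12) (m + 2) \<phi>"
  obtains a where "r = to_fract a" and "weight_le 0 m a" and "smult C (euler2_poly m a) = - \<phi>"
proof -
  have E: "euler2 m r = to_fract (smult (- 1 / C) \<phi>)"
    using eq C by (simp add: to_fract_smult rcst_divide field_simps eq_neg_iff_add_eq_0)
  have "3 * n + 4 \<le> 4 * m" if "coeff (smult (- 1 / C) \<phi>) n \<noteq> 0" for n
    using that \<phi> by (auto simp: weight_le_def)
  then obtain a where a: "r = to_fract a"
    and supp: "\<And>n. coeff a n \<noteq> 0 \<Longrightarrow> coeff (smult (- 1 / C) \<phi>) n \<noteq> 0 \<or> 3 * n = 4 * m \<or> 3 * n + 2 = 4 * m"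
    using euler2_eq_poly_imp_poly[OF m E] by blast
  have "weight_le 0 m a" unfolding weight_le_def
  proof (intro allI impI)
    fix n assume "coeff a n \<noteq> 0"
    then consider "coeff \<phi> n \<noteq> 0" | "3 * n = 4 * m" | "3 * n + 2 = 4 * m" using supp by auto
    thus "even n \<and> 3 * int n - 4 * int m \<le> 0"
    proof cases
      case 1 thus ?thesis using \<phi> by (auto simp: weight_le_def)
    qed presburger+
  qed
  moreover have "to_fract (euler2_poly m a) = to_fract (smult (- 1 / C) \<phi>)"
    using E a by (simp only: to_fract_euler2_poly)
  hence "euler2_poly m a = smult (- 1 / C) \<phi>" by (simp only: to_fract_eq_iff)
  hence "smult C (euler2_poly m a) = - \<phi>" using C by simp
  ultimately show ?thesis using a that by blast
qed

lemma even_poly_le_of_weight_le_0: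
  assumes "weight_le 0 k a"
  shows "even_poly_le a (2 * (Nk k + 1))"
  unfolding even_poly_le_def
proof
  show "degree a \<le> 2 * (Nk k + 1)"
  proof (rule degree_le, intro allI impI)
    fix i assume i: "2 * (Nk k + 1) < i"
    show "coeff a i = 0"
    proof (rule ccontr)
      assume "coeff a i \<noteq> 0"
      hence "3 * int i - 4 * int k \<le> 0" using assms by (auto simp: weight_le_def)
      thus False using i unfolding Nk_def by presburger
    qed
  qed
  show "\<forall>j. odd j \<longrightarrow> coeff a j = 0" using assms by (auto simp: weight_le_def)
qed

lemma top_coeff_of_weight_le_0:
  assumes "weight_le 0 k a" and "k mod 3 = 1"
  shows "coeff a (2 * (Nk k + 1)) = 0"
proof (rule ccontr)
  assume "coeff a (2 * (Nk k + 1)) \<noteq> 0"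
  hence "3 * int (2 * (Nk k + 1)) - 4 * int k \<le> 0" using assms(1) by (auto simp: weight_le_def)
  thus False using assms(2) unfolding Nk_def by presburger
qed

lemma even_poly_le_of_weight_le_residual:
  assumes "weight_le (- 12) (k + 2) \<phi>" and "k \<ge> 1"
  shows "even_poly_le (smult c \<phi>) (2 * Nk k)"
  unfolding even_poly_le_def
proof
  show "degree (smult c \<phi>) \<le> 2 * Nk k"
  proof (rule degree_le, intro allI impI)
    fix i assume i: "2 * Nk k < i"
    show "coeff (smult c \<phi>) i = 0"
    proof (rule ccontr)
      assume "coeff (smult c \<phi>) i \<noteq> 0"
      hence "even i" "3 * int i - 4 * int (k + 2) \<le> - 12" using assms(1) by (auto simp: weight_le_def)
      thus False using i assms(2) unfolding Nk_def by (auto elim!: evenE)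
    qed
  qed
  show "\<forall>j. odd j \<longrightarrow> coeff (smult c \<phi>) j = 0" using assms(1) by (auto simp: weight_le_def)
qed

lemma Nk_resonant:
  "k \<ge> 1 \<Longrightarrow> k mod 3 \<noteq> 1 \<Longrightarrow> 3 * (2 * (Nk k + 1)) = 4 * k \<or> 3 * (2 * (Nk k + 1)) + 2 = 4 * k"
  unfolding Nk_def by presburger

lemma Nk_nonresonant: "m \<le> Nk k \<Longrightarrow> k \<ge> 1 \<Longrightarrow> 3 * (2 * m) + 4 \<le> 4 * k"
  unfolding Nk_def by presburger

section \<open>Series in \<open>y\<close> with rational coefficients\<close>

definition fps_rcst :: "complex \<Rightarrow> ratfun fps" where
  "fps_rcst c = fps_const (rcst c)"

definition xsq :: "ratfun fps" where
  "xsq = fps_const (rX ^ 2)"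

definition y_dy :: "ratfun fps \<Rightarrow> ratfun fps" where
  "y_dy X = Abs_fps (\<lambda>n. of_nat n * X $ n)"

definition x_dx :: "ratfun fps \<Rightarrow> ratfun fps" where
  "x_dx X = Abs_fps (\<lambda>n. rX * rderiv (X $ n))"

lemma fps_rcst_nth [simp]: "fps_rcst c $ n = (if n = 0 then rcst c else 0)"
  by (simp add: fps_rcst_def)

lemma fps_rcst_mult_nth [simp]: "(fps_rcst c * X) $ n = rcst c * X $ n"
  by (simp add: fps_rcst_def)

lemma fps_rcst_0 [simp]: "fps_rcst 0 = 0"
  by (simp add: fps_rcst_def)

lemma fps_rcst_1 [simp]: "fps_rcst 1 = 1"
  by (simp add: fps_rcst_def)

lemma fps_rcst_numeral [simp]: "fps_rcst (numeral n) = numeral n"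
  by (simp add: fps_rcst_def numeral_fps_const)

lemma fps_rcst_uminus [simp]: "fps_rcst (- a) = - fps_rcst a"
  by (simp add: fps_rcst_def)

lemma fps_rcst_mult: "fps_rcst (a * b) = fps_rcst a * fps_rcst b"
  by (simp add: fps_rcst_def)

lemma fps_rcst_diff: "fps_rcst (a - b) = fps_rcst a - fps_rcst b"
  by (simp add: fps_rcst_def)

lemma y_dy_nth [simp]: "y_dy X $ n = of_nat n * X $ n"
  by (simp add: y_dy_def)

lemma x_dx_nth [simp]: "x_dx X $ n = rX * rderiv (X $ n)"
  by (simp add: x_dx_def)

lemma y_dy_eq: "y_dy X = fps_X * fps_deriv X"
  by (rule fps_ext) (simp add: algebra_simps)

lemma x_dx_eq: "x_dx S = fps_const rX * Abs_fps (\<lambda>n. rderiv (S $ n))"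
  by (rule fps_ext) simp

lemma y_dy_add [simp]: "y_dy (X + Y) = y_dy X + y_dy Y"
  by (rule fps_ext) (simp add: algebra_simps)

lemma x_dx_add [simp]: "x_dx (X + Y) = x_dx X + x_dx Y"
  by (rule fps_ext) (simp add: algebra_simps)

lemma y_dy_diff [simp]: "y_dy (X - Y) = y_dy X - y_dy Y"
  by (rule fps_ext) (simp add: algebra_simps)

lemma x_dx_diff [simp]: "x_dx (X - Y) = x_dx X - x_dx Y"
  by (rule fps_ext) (simp add: algebra_simps)

lemma y_dy_fps_rcst [simp]: "y_dy (fps_rcst c) = 0"
  by (rule fps_ext) simp

lemma x_dx_fps_rcst [simp]: "x_dx (fps_rcst c) = 0"
  by (rule fps_ext) simp

lemma y_dy_xsq [simp]: "y_dy xsq = 0"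
  by (rule fps_ext) (simp add: xsq_def)

lemma x_dx_xsq [simp]: "x_dx xsq = 2 * xsq"
proof (rule fps_ext)
  fix n
  have "rderiv (rX ^ 2) = 2 * rX" by (simp add: power2_eq_square)
  thus "x_dx xsq $ n = (2 * xsq) $ n" by (simp add: xsq_def numeral_fps_const power2_eq_square)
qed

definition ord_ge :: "nat \<Rightarrow> ratfun fps \<Rightarrow> bool" where
  "ord_ge n X \<longleftrightarrow> (\<forall>j<n. X $ j = 0)"

lemma ord_ge_0 [simp]: "ord_ge 0 X"
  by (simp add: ord_ge_def)

lemma ord_ge_mono: "ord_ge a X \<Longrightarrow> b \<le> a \<Longrightarrow> ord_ge b X"
  by (simp add: ord_ge_def)

lemma ord_ge_add: "ord_ge a X \<Longrightarrow> ord_ge a Y \<Longrightarrow> ord_ge a (X + Y)"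
  by (simp add: ord_ge_def)

lemma ord_ge_diff: "ord_ge a X \<Longrightarrow> ord_ge a Y \<Longrightarrow> ord_ge a (X - Y)"
  by (simp add: ord_ge_def)

lemma ord_ge_y_dy: "ord_ge a X \<Longrightarrow> ord_ge a (y_dy X)"
  by (simp add: ord_ge_def)

lemma ord_ge_x_dx: "ord_ge a X \<Longrightarrow> ord_ge a (x_dx X)"
  by (simp add: ord_ge_def)

lemma ord_ge_X_power: "ord_ge n (fps_X ^ n)"
  by (simp add: ord_ge_def fps_X_power_nth)

lemma ord_ge_nth: "ord_ge a X \<Longrightarrow> j < a \<Longrightarrow> X $ j = 0"
  by (simp add: ord_ge_def)

lemma ord_ge_mult_nth:
  assumes "ord_ge a X" "ord_ge b Y"
  shows "ord_ge (a + b) (X * Y)" and "(X * Y) $ (a + b) = X $ a * Y $ b"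
proof -
  have z: "X $ i * Y $ (n - i) = 0" if "n < a + b \<or> (n = a + b \<and> i \<noteq> a)" "i \<le> n" for n i
  proof (cases "i < a")
    case True thus ?thesis using assms(1) by (simp add: ord_ge_def)
  next
    case False
    hence "n - i < b" using that by auto
    thus ?thesis using assms(2) by (simp add: ord_ge_def)
  qed
  show "ord_ge (a + b) (X * Y)" unfolding ord_ge_def fps_mult_nth
    using z by (intro allI impI sum.neutral) auto
  have "(X * Y) $ (a + b) = (\<Sum>i\<in>{0..a+b}. if i = a then X $ a * Y $ b else 0)"
    unfolding fps_mult_nth by (rule sum.cong) (auto simp: z)
  thus "(X * Y) $ (a + b) = X $ a * Y $ b" by simp
qed

lemma ord_ge_mult_nth_left: "ord_ge b Y \<Longrightarrow> (X * Y) $ b = X $ 0 * Y $ b"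
  using ord_ge_mult_nth(2)[OF ord_ge_0] by fastforce

lemma ord_ge_mult_nth_right: "ord_ge a X \<Longrightarrow> (X * Y) $ a = X $ a * Y $ 0"
  using ord_ge_mult_nth(2)[OF _ ord_ge_0] by fastforce

lemma ord_ge_mult: "ord_ge a X \<Longrightarrow> ord_ge b Y \<Longrightarrow> c \<le> a + b \<Longrightarrow> ord_ge c (X * Y)"
  using ord_ge_mult_nth(1) ord_ge_mono by blast

definition fps_weight_le :: "int \<Rightarrow> ratfun fps \<Rightarrow> bool" where
  "fps_weight_le w X \<longleftrightarrow> (\<forall>k. \<exists>c. X $ k = to_fract c \<and> weight_le w k c)"

lemma fps_weight_leE:
  assumes "fps_weight_le w X"
  obtains c where "\<And>k. X $ k = to_fract (c k)" "\<And>k. weight_le w k (c k)"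
  using assms unfolding fps_weight_le_def by metis

lemma fps_weight_le_mono: "fps_weight_le w X \<Longrightarrow> w \<le> w' \<Longrightarrow> fps_weight_le w' X"
  unfolding fps_weight_le_def weight_le_def by (meson order_trans)

lemma fps_weight_le_add: "fps_weight_le w X \<Longrightarrow> fps_weight_le w Y \<Longrightarrow> fps_weight_le w (X + Y)"
  unfolding fps_weight_le_def by (metis fps_add_nth weight_le_add to_fract_add)

lemma fps_weight_le_uminus: "fps_weight_le w X \<Longrightarrow> fps_weight_le w (- X)"
  unfolding fps_weight_le_def weight_le_def by (metis fps_neg_nth coeff_minus neg_equal_0_iff_equal to_fract_uminus)

lemma fps_weight_le_diff: "fps_weight_le w X \<Longrightarrow> fps_weight_le w Y \<Longrightarrow> fps_weight_le w (X - Y)"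
  using fps_weight_le_add[of w X "- Y"] fps_weight_le_uminus[of w Y] by simp

lemma fps_weight_le_mult:
  assumes "fps_weight_le w1 X" "fps_weight_le w2 Y"
  shows "fps_weight_le (w1 + w2) (X * Y)"
proof -
  obtain c where c: "\<And>k. X $ k = to_fract (c k)" "\<And>k. weight_le w1 k (c k)"
    using fps_weight_leE[OF assms(1)] by blast
  obtain d where d: "\<And>k. Y $ k = to_fract (d k)" "\<And>k. weight_le w2 k (d k)"
    using fps_weight_leE[OF assms(2)] by blast
  show ?thesis unfolding fps_weight_le_def
  proof
    fix k
    have "(X * Y) $ k = to_fract (\<Sum>i=0..k. c i * d (k - i))"
      by (simp add: fps_mult_nth c d)
    moreover have "weight_le (w1 + w2) k (\<Sum>i=0..k. c i * d (k - i))"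
    proof (rule weight_le_sum)
      fix i assume "i \<in> {0..k}"
      hence "i + (k - i) = k" by simp
      thus "weight_le (w1 + w2) k (c i * d (k - i))"
        using weight_le_mult[OF c(2)[of i] d(2)[of "k - i"]] by simp
    qed simp
    ultimately show "\<exists>c. (X * Y) $ k = to_fract c \<and> weight_le (w1 + w2) k c" by blast
  qed
qed

lemma fps_weight_le_fps_rcst: "fps_weight_le 0 (fps_rcst c)"
  unfolding fps_weight_le_def
  by (auto simp: weight_le_def rcst_def coeff_pCons split: nat.splits intro!: exI[of _ "if _ = 0 then [:c:] else 0"])

lemma fps_weight_le_1: "fps_weight_le 0 1"
  using fps_weight_le_fps_rcst[of 1] by simp

lemma fps_weight_le_numeral: "fps_weight_le 0 (numeral n)"
  using fps_weight_le_fps_rcst[of "numeral n"] by simp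

lemma fps_weight_le_X: "fps_weight_le (- 4) fps_X"
  unfolding fps_weight_le_def
  by (auto simp: weight_le_def fps_X_def coeff_1 intro!: exI[of _ "if _ = 1 then 1 else 0"])

lemma fps_weight_le_xsq: "fps_weight_le 6 xsq"
proof -
  have "rX ^ 2 = to_fract [:0, 0, 1:]"
    by (simp add: rX_def power2_eq_square flip: to_fract_mult)
  moreover have "weight_le 6 0 [:0, 0, 1:]"
    by (auto simp: weight_le_def coeff_pCons split: nat.splits)
  ultimately show ?thesis unfolding fps_weight_le_def
    by (auto simp: xsq_def weight_le_def intro!: exI[of _ "if _ = 0 then [:0, 0, 1:] else 0"])
qed

lemma fps_weight_le_power: "fps_weight_le w X \<Longrightarrow> w \<le> 0 \<Longrightarrow> fps_weight_le (int n * w) (X ^ n)"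
proof (induction n)
  case 0
  thus ?case using fps_weight_le_1 by simp
next
  case (Suc n)
  thus ?case using fps_weight_le_mult[of w X "int n * w" "X ^ n"] by (simp add: algebra_simps)
qed

lemma fps_weight_le_y_dy:
  assumes "fps_weight_le w X"
  shows "fps_weight_le w (y_dy X)"
proof -
  obtain c where c: "\<And>k. X $ k = to_fract (c k)" "\<And>k. weight_le w k (c k)"
    using fps_weight_leE[OF assms] by blast
  have "y_dy X $ k = to_fract (smult (of_nat k) (c k))" for k
    by (simp add: c to_fract_smult)
  moreover have "weight_le w k (smult (of_nat k) (c k))" for k
    using c(2)[of k] by (simp add: weight_le_def)
  ultimately show ?thesis unfolding fps_weight_le_def by blast
qed

lemma fps_weight_le_x_dx:
  assumes "fps_weight_le w X"
  shows "fps_weight_le w (x_dx X)"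
proof -
  obtain c where c: "\<And>k. X $ k = to_fract (c k)" "\<And>k. weight_le w k (c k)"
    using fps_weight_leE[OF assms] by blast
  have "x_dx X $ k = to_fract ([:0, 1:] * pderiv (c k))" for k
    by (simp only: x_dx_nth c rderiv_to_fract to_fract_x_mult)
  moreover have "weight_le w k ([:0, 1:] * pderiv (c k))" for k
    using c(2)[of k] by (auto simp only: weight_le_def coeff_x_pderiv mult_eq_0_iff de_Morgan_disj)
  ultimately show ?thesis unfolding fps_weight_le_def by blast
qed

text \<open>The operator \<open>4y\<partial>\<^sub>y - 3x\<partial>\<^sub>x + w\<close> multiplies \<open>x\<^sup>n y\<^sup>k\<close> by \<open>w - (3n - 4k)\<close>, so it kills the monomials
  of weight exactly \<open>w\<close>; as all weights are even, what remains has weight at most \<open>w - 2\<close>.\<close>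

lemma fps_weight_le_kill_top:
  assumes "fps_weight_le w X" "even w"
  shows "fps_weight_le (w - 2) (4 * y_dy X - 3 * x_dx X + fps_rcst (of_int w) * X)"
proof -
  obtain c where c: "\<And>k. X $ k = to_fract (c k)" "\<And>k. weight_le w k (c k)"
    using fps_weight_leE[OF assms(1)] by blast
  show ?thesis unfolding fps_weight_le_def
  proof
    fix k
    define d where "d = smult (4 * of_nat k + of_int w) (c k) - smult 3 ([:0, 1:] * pderiv (c k))"
    have cd: "coeff d n = (4 * of_nat k + of_int w - 3 * of_nat n) * coeff (c k) n" for n
      unfolding d_def coeff_diff coeff_smult coeff_x_pderiv by (simp add: algebra_simps)
    have "to_fract d = rcst (4 * of_nat k + of_int w) * to_fract (c k) - rcst 3 * (rX * to_fract (pderiv (c k)))"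
      by (simp only: d_def to_fract_diff to_fract_smult to_fract_x_mult)
    hence "(4 * y_dy X - 3 * x_dx X + fps_rcst (of_int w) * X) $ k = to_fract d"
      by (simp add: c numeral_fps_const distrib_right)
    moreover have "weight_le (w - 2) k d" unfolding weight_le_def
    proof (intro allI impI)
      fix n assume nz: "coeff d n \<noteq> 0"
      hence c0: "coeff (c k) n \<noteq> 0" and ne: "4 * of_nat k + of_int w - 3 * of_nat n \<noteq> (0::complex)"
        by (auto simp: cd)
      from c0 c(2)[of k] have ev: "even n" and le: "3 * int n - 4 * int k \<le> w"
        by (auto simp: weight_le_def)
      have "of_int (4 * int k + w - 3 * int n) \<noteq> (0::complex)" using ne by simp
      hence "3 * int n - 4 * int k \<noteq> w" by (simp only: of_int_eq_0_iff)
      thus "even n \<and> 3 * int n - 4 * int k \<le> w - 2"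
        using le ev assms(2) by (auto elim!: evenE) presburger
    qed
    ultimately show "\<exists>d. (4 * y_dy X - 3 * x_dx X + fps_rcst (of_int w) * X) $ k = to_fract d
        \<and> weight_le (w - 2) k d"
      by blast
  qed
qed

lemma fps_weight_le_cutoff:
  assumes S0: "S $ 0 = rcst q"
    and low: "\<And>j. 1 \<le> j \<Longrightarrow> j < k \<Longrightarrow> \<exists>a. S $ j = to_fract a \<and> weight_le 0 j a"
  shows "fps_weight_le 0 (fps_cutoff k S)"
  unfolding fps_weight_le_def
proof
  fix j
  show "\<exists>c. fps_cutoff k S $ j = to_fract c \<and> weight_le 0 j c"
  proof (cases "j < k")
    case True
    show ?thesis
    proof (cases "j = 0")
      case True
      thus ?thesis using \<open>j < k\<close> S0 weight_le_const by (auto simp: rcst_def)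
    next
      case False
      thus ?thesis using low[of j] \<open>j < k\<close> by auto
    qed
  qed (auto simp: weight_le_def intro: exI[of _ 0])
qed

notation fls_nth (infixl \<open>$$\<close> 75)

lemma fls_times_nth_from:
  fixes f g :: "ratfun fls"
  assumes fa: "\<forall>i<a. f $$ i = 0" and gb: "\<forall>j<b. g $$ j = 0"
  shows "(f * g) $$ n = (\<Sum>i=a..n-b. f $$ i * g $$ (n - i))"
proof (cases "f = 0 \<or> g = 0")
  case True thus ?thesis by auto
next
  case False
  hence f0: "f \<noteq> 0" and g0: "g \<noteq> 0" by auto
  have da: "a \<le> fls_subdegree f" using fls_subdegree_geI[OF f0] fa by blast
  have db: "b \<le> fls_subdegree g" using fls_subdegree_geI[OF g0] gb by blast
  have "(f * g) $$ n = (\<Sum>i=fls_subdegree f..n - fls_subdegree g. f $$ i * g $$ (n - i))"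
    by (rule fls_times_nth(2))
  also have "\<dots> = (\<Sum>i=a..n-b. f $$ i * g $$ (n - i))"
  proof (rule sum.mono_neutral_left)
    show "\<forall>i\<in>{a..n - b} - {fls_subdegree f..n - fls_subdegree g}. f $$ i * g $$ (n - i) = 0"
    proof
      fix i assume "i \<in> {a..n - b} - {fls_subdegree f..n - fls_subdegree g}"
      hence "i < fls_subdegree f \<or> n - i < fls_subdegree g" by auto
      thus "f $$ i * g $$ (n - i) = 0" by auto
    qed
  qed (use da db in auto)
  finally show ?thesis .
qed

lemma xderiv_nth [simp]: "xderiv F $$ n = rderiv (F $$ n)"
  unfolding xderiv_def by (rule nth_Abs_fls_lower_bound[of "fls_subdegree F"]) simp

lemma xderiv_add [simp]: "xderiv (F + G) = xderiv F + xderiv G"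
  by (rule fls_eqI) simp


lemma xderiv_one [simp]: "xderiv 1 = 0"
  by (rule fls_eqI) simp

lemma xderiv_mult [simp]: "xderiv (F * G) = xderiv F * G + F * xderiv G"
proof (rule fls_eqI)
  fix n
  define a where "a = fls_subdegree F"
  define b where "b = fls_subdegree G"
  have fa: "\<forall>i<a. F $$ i = 0" "\<forall>i<a. xderiv F $$ i = 0" by (simp_all add: a_def)
  have gb: "\<forall>i<b. G $$ i = 0" "\<forall>i<b. xderiv G $$ i = 0" by (simp_all add: b_def)
  show "xderiv (F * G) $$ n = (xderiv F * G + F * xderiv G) $$ n"
    by (simp add: fls_times_nth_from[OF fa(1) gb(1)] fls_times_nth_from[OF fa(2) gb(1)]
        fls_times_nth_from[OF fa(1) gb(2)] rderiv_sum sum.distrib)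
qed

lemma xderiv_fps_to_fls: "xderiv (fps_to_fls S) = fps_to_fls (Abs_fps (\<lambda>n. rderiv (S $ n)))"
  by (rule fls_eqI) simp

lemma fls_numeral_nonzero [simp]: "(numeral n :: ratfun fls) \<noteq> 0"
  by (metis fls_const_numeral fls_const_nonzero ratfun_numeral_nonzero)

lemmas fls_const_simps = fls_plus_const[symmetric] fls_minus_const[symmetric] fls_const_mult_const[symmetric]
  fls_const_power

lemma fps_to_fls_fps_rcst [simp]: "fps_to_fls (fps_rcst c) = fls_const (rcst c)"
  by (simp add: fps_rcst_def)

lemma fps_to_fls_xsq [simp]: "fps_to_fls xsq = fls_const rX ^ 2"
  by (simp add: xsq_def fls_const_power)

section \<open>The equation as a polynomial identity in \<open>y\<close>\<close>

locale pde_params =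
  fixes P p \<kappa> :: complex
  assumes P_nonzero: "P \<noteq> 0" and \<kappa>_nonzero: "\<kappa> \<noteq> 0"
begin

text \<open>With \<open>E = 4y + \<kappa>\<^sup>2(y - 1)\<^sup>2\<close> and \<open>K = 4Ey\<^sup>2\<close> the operator \<open>D\<close> is \<open>V/(x\<^sup>2K)\<close> for the
  derivation \<open>V = 4iPEy\<partial>\<^sub>y - Wx\<partial>\<^sub>x\<close>, and \<open>V(x\<^sup>2K) = x\<^sup>2J\<close>. Multiplying the equation by
  \<open>x\<^sup>6K\<^sup>3\<close> turns it into \<open>pde_poly A = 0\<close>.\<close>

definition iP :: "complex" where
  "iP = \<i> * P"

definition Epol :: "ratfun fps" where
  "Epol = fps_rcst (\<kappa>^2) + fps_X * (fps_rcst (4 - 2 * \<kappa>^2) + fps_rcst (\<kappa>^2) * fps_X)"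

definition Wpol :: "ratfun fps" where
  "Wpol = fps_rcst (3 * iP * \<kappa>^2) + fps_X * (2 * Epol * xsq * fps_X
    + fps_rcst iP * (fps_rcst (16 - 8 * \<kappa>^2) + fps_rcst (5 * \<kappa>^2) * fps_X))"

definition Vop :: "ratfun fps \<Rightarrow> ratfun fps" where
  "Vop X = fps_rcst (4 * iP) * Epol * y_dy X - Wpol * x_dx X"

definition Kpol :: "ratfun fps" where
  "Kpol = 4 * Epol * fps_X ^ 2"

definition Jpol :: "ratfun fps" where
  "Jpol = Vop Kpol - 2 * Wpol * Kpol"

definition pde_poly :: "ratfun fps \<Rightarrow> ratfun fps" where
  "pde_poly S = S * (Kpol * Vop (Vop S) - Jpol * Vop S) - Kpol * (Vop S)^2
    + fps_rcst (256 * p^2 / 3) * Epol^2 * fps_X^3 * (S^3 - 1)"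

lemma iP_nonzero: "iP \<noteq> 0"
  using P_nonzero by (simp add: iP_def)

lemma Vop_add: "Vop (X + Y) = Vop X + Vop Y"
  by (simp add: Vop_def algebra_simps)

lemma Vop_fps_rcst [simp]: "Vop (fps_rcst c) = 0"
  by (simp add: Vop_def)

lemma Vop_0 [simp]: "Vop 0 = 0"
  using Vop_fps_rcst[of 0] by simp

lemma fps_weight_le_Epol_tail: "fps_weight_le (- 4) (Epol - fps_rcst (\<kappa>^2))"
proof -
  have "fps_weight_le 0 (fps_rcst (4 - 2 * \<kappa>^2) + fps_rcst (\<kappa>^2) * fps_X)"
    by (rule fps_weight_le_add[OF fps_weight_le_fps_rcst
          fps_weight_le_mono[OF fps_weight_le_mult[OF fps_weight_le_fps_rcst fps_weight_le_X]]]) simp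
  from fps_weight_le_mult[OF fps_weight_le_X this] show ?thesis
    by (simp add: Epol_def)
qed

lemma fps_weight_le_Epol: "fps_weight_le 0 Epol"
  using fps_weight_le_add[OF fps_weight_le_mono[OF fps_weight_le_Epol_tail]
      fps_weight_le_fps_rcst[of "\<kappa>^2"]] by simp

lemma fps_weight_le_Wpol_tail: "fps_weight_le (- 2) (Wpol - fps_rcst (3 * iP * \<kappa>^2))"
proof -
  have "fps_weight_le 2 (2 * Epol * xsq * fps_X)"
    using fps_weight_le_mult[OF fps_weight_le_mult[OF fps_weight_le_mult[OF
          fps_weight_le_numeral fps_weight_le_Epol] fps_weight_le_xsq] fps_weight_le_X] by simp
  moreover have "fps_weight_le 2 (fps_rcst iP * (fps_rcst (16 - 8 * \<kappa>^2) + fps_rcst (5 * \<kappa>^2) * fps_X))"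
    by (rule fps_weight_le_mono[OF fps_weight_le_mult[OF fps_weight_le_fps_rcst fps_weight_le_add[OF
          fps_weight_le_fps_rcst fps_weight_le_mono[OF
          fps_weight_le_mult[OF fps_weight_le_fps_rcst fps_weight_le_X]]]]]) simp_all
  ultimately have "fps_weight_le (- 2) (fps_X * (2 * Epol * xsq * fps_X
      + fps_rcst iP * (fps_rcst (16 - 8 * \<kappa>^2) + fps_rcst (5 * \<kappa>^2) * fps_X)))"
    using fps_weight_le_mult[OF fps_weight_le_X fps_weight_le_add] by fastforce
  thus ?thesis by (simp add: Wpol_def)
qed

lemma Vop_eq_kill_top:
  "Vop X + fps_rcst (iP * \<kappa>^2 * of_int w) * X =
     fps_rcst (iP * \<kappa>^2) * (4 * y_dy X - 3 * x_dx X + fps_rcst (of_int w) * X)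
     + fps_rcst (4 * iP) * (Epol - fps_rcst (\<kappa>^2)) * y_dy X
     - (Wpol - fps_rcst (3 * iP * \<kappa>^2)) * x_dx X"
  by (simp add: Vop_def fps_rcst_mult fps_rcst_diff algebra_simps)

lemma fps_weight_le_Vop_shift:
  assumes "fps_weight_le w X" "even w"
  shows "fps_weight_le (w - 2) (Vop X + fps_rcst (iP * \<kappa>^2 * of_int w) * X)"
proof -
  have a: "fps_weight_le (w - 2) (fps_rcst (iP * \<kappa>^2) * (4 * y_dy X - 3 * x_dx X + fps_rcst (of_int w) * X))"
    using fps_weight_le_mult[OF fps_weight_le_fps_rcst fps_weight_le_kill_top[OF assms]] by simp
  have b: "fps_weight_le (w - 2) (fps_rcst (4 * iP) * (Epol - fps_rcst (\<kappa>^2)) * y_dy X)"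
    by (rule fps_weight_le_mono[OF fps_weight_le_mult[OF fps_weight_le_mult[OF fps_weight_le_fps_rcst
          fps_weight_le_Epol_tail] fps_weight_le_y_dy[OF assms(1)]]]) simp
  have c: "fps_weight_le (w - 2) ((Wpol - fps_rcst (3 * iP * \<kappa>^2)) * x_dx X)"
    using fps_weight_le_mult[OF fps_weight_le_Wpol_tail fps_weight_le_x_dx[OF assms(1)]] by simp
  show ?thesis unfolding Vop_eq_kill_top by (intro fps_weight_le_diff fps_weight_le_add a b c)
qed

lemma fps_weight_le_Kpol: "fps_weight_le (- 8) Kpol"
  using fps_weight_le_mult[OF fps_weight_le_mult[OF fps_weight_le_numeral fps_weight_le_Epol]
      fps_weight_le_power[OF fps_weight_le_X, of 2]] by (simp add: Kpol_def)

lemma fps_weight_le_Jpol_shift: "fps_weight_le (- 10) (Jpol - fps_rcst (2 * iP * \<kappa>^2) * Kpol)"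
proof -
  have "Jpol - fps_rcst (2 * iP * \<kappa>^2) * Kpol =
     (Vop Kpol + fps_rcst (iP * \<kappa>^2 * of_int (- 8)) * Kpol) - 2 * (Wpol - fps_rcst (3 * iP * \<kappa>^2)) * Kpol"
    by (simp add: Jpol_def fps_rcst_mult fps_rcst_diff algebra_simps)
  moreover have "fps_weight_le (- 10) (Vop Kpol + fps_rcst (iP * \<kappa>^2 * of_int (- 8)) * Kpol)"
    using fps_weight_le_Vop_shift[OF fps_weight_le_Kpol] by simp
  moreover have "fps_weight_le (- 10) (2 * (Wpol - fps_rcst (3 * iP * \<kappa>^2)) * Kpol)"
    using fps_weight_le_mult[OF fps_weight_le_mult[OF fps_weight_le_numeral fps_weight_le_Wpol_tail]
          fps_weight_le_Kpol] by simp
  ultimately show ?thesis by (simp add: fps_weight_le_diff)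
qed

lemma fps_weight_le_pde_poly:
  assumes S: "fps_weight_le 0 S"
  shows "fps_weight_le (- 12) (pde_poly S)"
proof -
  define T where "T = Vop S"
  have T: "fps_weight_le (- 2) T" using fps_weight_le_Vop_shift[OF S] by (simp add: T_def)
  have VT: "fps_weight_le (- 4) (Vop T + fps_rcst (iP * \<kappa>^2 * of_int (- 2)) * T)"
    using fps_weight_le_Vop_shift[OF T] by simp
  have "S * (Kpol * Vop T - Jpol * T) =
     S * (Kpol * (Vop T + fps_rcst (iP * \<kappa>^2 * of_int (- 2)) * T)
          - (Jpol - fps_rcst (2 * iP * \<kappa>^2) * Kpol) * T)"
    by (simp add: fps_rcst_mult algebra_simps)
  also have "fps_weight_le (- 12) \<dots>"
  proof -
    have "fps_weight_le (- 12) (Kpol * (Vop T + fps_rcst (iP * \<kappa>^2 * of_int (- 2)) * T))"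
      using fps_weight_le_mult[OF fps_weight_le_Kpol VT] by simp
    moreover have "fps_weight_le (- 12) ((Jpol - fps_rcst (2 * iP * \<kappa>^2) * Kpol) * T)"
      using fps_weight_le_mult[OF fps_weight_le_Jpol_shift T] by simp
    ultimately show ?thesis using fps_weight_le_mult[OF S fps_weight_le_diff] by fastforce
  qed
  finally have A: "fps_weight_le (- 12) (S * (Kpol * Vop T - Jpol * T))" .
  have B: "fps_weight_le (- 12) (Kpol * T^2)"
    using fps_weight_le_mult[OF fps_weight_le_Kpol fps_weight_le_power[OF T, of 2]] by simp
  have C: "fps_weight_le (- 12) (fps_rcst (256 * p^2 / 3) * Epol^2 * fps_X^3 * (S^3 - 1))"
  proof -
    have "fps_weight_le 0 (S^3 - 1)"
      using fps_weight_le_power[OF S, of 3] fps_weight_le_1 by (simp add: fps_weight_le_diff)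
    moreover have "fps_weight_le 0 (Epol^2)" "fps_weight_le (- 12) (fps_X^3)"
      using fps_weight_le_power[OF fps_weight_le_Epol, of 2] fps_weight_le_power[OF fps_weight_le_X, of 3]
      by simp_all
    ultimately show ?thesis
      using fps_weight_le_mult[OF fps_weight_le_mult[OF fps_weight_le_mult[OF fps_weight_le_fps_rcst]]]
      by fastforce
  qed
  show ?thesis unfolding pde_poly_def T_def[symmetric]
    by (intro fps_weight_le_add fps_weight_le_diff A B C)
qed

lemma Epol_nth_0 [simp]: "Epol $ 0 = rcst (\<kappa>^2)"
  by (simp add: Epol_def)

lemma Wpol_nth_0 [simp]: "Wpol $ 0 = rcst (3 * iP * \<kappa>^2)"
  by (simp add: Wpol_def)

lemma Vop_ord_ge:
  assumes "ord_ge n X"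
  shows "ord_ge n (Vop X)"
proof -
  have "ord_ge (0 + n) (fps_rcst (4 * iP) * Epol * y_dy X)" "ord_ge (0 + n) (Wpol * x_dx X)"
    by (intro ord_ge_mult_nth(1)[OF ord_ge_0] ord_ge_y_dy ord_ge_x_dx assms)+
  thus ?thesis unfolding Vop_def by (simp add: ord_ge_diff)
qed

lemma Vop_nth_ord:
  assumes "ord_ge n X"
  shows "Vop X $ n = rcst (4 * iP * \<kappa>^2) * (of_nat n * X $ n) - rcst (3 * iP * \<kappa>^2) * (rX * rderiv (X $ n))"
proof -
  have "(fps_rcst (4 * iP) * Epol * y_dy X) $ (0 + n) = (fps_rcst (4 * iP) * Epol) $ 0 * y_dy X $ n"
    by (rule ord_ge_mult_nth(2)[OF ord_ge_0 ord_ge_y_dy[OF assms]])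
  moreover have "(Wpol * x_dx X) $ (0 + n) = Wpol $ 0 * x_dx X $ n"
    by (rule ord_ge_mult_nth(2)[OF ord_ge_0 ord_ge_x_dx[OF assms]])
  ultimately show ?thesis unfolding Vop_def by simp
qed

lemma Vop_nth_0: "Vop X $ 0 = - rcst (3 * iP * \<kappa>^2) * (rX * rderiv (X $ 0))"
  using Vop_nth_ord[OF ord_ge_0] by simp

lemma Kpol_ord_ge: "ord_ge 2 Kpol"
  unfolding Kpol_def by (rule ord_ge_mult[OF ord_ge_0 ord_ge_X_power]) simp

lemma Kpol_nth_2: "Kpol $ 2 = rcst (4 * \<kappa>^2)"
proof -
  have "(4 * Epol * fps_X ^ 2) $ (0 + 2) = (4 * Epol) $ 0 * (fps_X ^ 2) $ 2"
    by (rule ord_ge_mult_nth(2)[OF ord_ge_0 ord_ge_X_power])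
  hence "Kpol $ 2 = (4 * Epol) $ 0 * (fps_X ^ 2) $ 2" by (simp only: add_0 Kpol_def)
  thus ?thesis by (simp add: numeral_fps_const fps_X_power_nth)
qed

lemma Jpol_ord_ge: "ord_ge 2 Jpol"
  unfolding Jpol_def
  by (intro ord_ge_diff Vop_ord_ge Kpol_ord_ge ord_ge_mult[OF ord_ge_0 Kpol_ord_ge]) simp

lemma Jpol_nth_2: "Jpol $ 2 = rcst (8 * iP * \<kappa>^4)"
proof -
  have "(2 * Wpol * Kpol) $ (0 + 2) = (2 * Wpol) $ 0 * Kpol $ 2"
    by (rule ord_ge_mult_nth(2)[OF ord_ge_0 Kpol_ord_ge])
  hence a: "(2 * Wpol * Kpol) $ 2 = rcst (2 * (3 * iP * \<kappa>^2) * (4 * \<kappa>^2))"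
    by (simp only: add_0 Kpol_nth_2) (simp add: numeral_fps_const)
  have b: "Vop Kpol $ 2 = rcst (4 * iP * \<kappa>^2 * (2 * (4 * \<kappa>^2)))"
    using Vop_nth_ord[OF Kpol_ord_ge] by (simp add: Kpol_nth_2)
  have "4 * iP * \<kappa>^2 * (2 * (4 * \<kappa>^2)) - 2 * (3 * iP * \<kappa>^2) * (4 * \<kappa>^2) = 8 * iP * \<kappa>^4"
    by (simp add: algebra_simps power4_eq_xxxx power2_eq_square)
  thus ?thesis by (simp only: Jpol_def fps_sub_nth a b flip: rcst_diff)
qed

lemma cubic_term_ord_ge: "ord_ge 3 (fps_rcst c * Epol^2 * fps_X^3)"
  using ord_ge_mult_nth(1)[OF ord_ge_0 ord_ge_X_power[of 3]] by simp

lemma pde_poly_ord_ge_2: "ord_ge 2 (pde_poly S)"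
proof -
  have "ord_ge 2 (Kpol * Vop (Vop S) - Jpol * Vop S)"
    by (intro ord_ge_diff ord_ge_mult[OF Kpol_ord_ge ord_ge_0] ord_ge_mult[OF Jpol_ord_ge ord_ge_0]) simp_all
  hence "ord_ge 2 (S * (Kpol * Vop (Vop S) - Jpol * Vop S))" by (rule ord_ge_mult[OF ord_ge_0]) simp
  moreover have "ord_ge 2 (Kpol * (Vop S)^2)" by (rule ord_ge_mult[OF Kpol_ord_ge ord_ge_0]) simp
  moreover have "ord_ge 2 (fps_rcst (256 * p^2 / 3) * Epol^2 * fps_X^3 * (S^3 - 1))"
    by (rule ord_ge_mult[OF cubic_term_ord_ge ord_ge_0]) simp
  ultimately show ?thesis unfolding pde_poly_def by (simp add: ord_ge_add ord_ge_diff)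
qed

lemma pde_poly_nth_2:
  "pde_poly S $ 2 = S $ 0 * (Kpol $ 2 * Vop (Vop S) $ 0 - Jpol $ 2 * Vop S $ 0) - Kpol $ 2 * (Vop S $ 0)^2"
proof -
  have o: "ord_ge 2 (Kpol * Vop (Vop S) - Jpol * Vop S)"
    by (intro ord_ge_diff ord_ge_mult[OF Kpol_ord_ge ord_ge_0] ord_ge_mult[OF Jpol_ord_ge ord_ge_0]) simp_all
  have a: "(Kpol * Vop (Vop S)) $ 2 = Kpol $ 2 * Vop (Vop S) $ 0"
    by (rule ord_ge_mult_nth_right[OF Kpol_ord_ge])
  have b: "(Jpol * Vop S) $ 2 = Jpol $ 2 * Vop S $ 0"
    by (rule ord_ge_mult_nth_right[OF Jpol_ord_ge])
  have c: "(S * (Kpol * Vop (Vop S) - Jpol * Vop S)) $ 2 = S $ 0 * (Kpol * Vop (Vop S) - Jpol * Vop S) $ 2"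
    by (rule ord_ge_mult_nth_left[OF o])
  have d: "(Kpol * (Vop S)^2) $ 2 = Kpol $ 2 * (Vop S $ 0)^2"
    using ord_ge_mult_nth_right[OF Kpol_ord_ge] by (simp add: fps_power_zeroth)
  have e: "(fps_rcst (256 * p^2 / 3) * Epol^2 * fps_X^3 * (S^3 - 1)) $ 2 = 0"
    by (rule ord_ge_nth[OF ord_ge_mult_nth(1)[OF cubic_term_ord_ge ord_ge_0]]) simp
  show ?thesis unfolding pde_poly_def fps_add_nth fps_sub_nth c d e fps_sub_nth a b by simp
qed

lemma pde_poly_nth_2_eq:
  assumes u: "u = rX * rderiv (S $ 0)"
  shows "pde_poly S $ 2 = rcst (12 * iP^2 * \<kappa>^6) * (S $ 0 * (3 * rX * rderiv u + 2 * u) - 3 * u^2)"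
proof -
  define c K2 J2 C where "c = rcst (3 * iP * \<kappa>^2)" and "K2 = rcst (4 * \<kappa>^2)"
    and "J2 = rcst (8 * iP * \<kappa>^4)" and "C = rcst (12 * iP^2 * \<kappa>^6)"
  have "4 * \<kappa>^2 * (3 * iP * \<kappa>^2)^2 = 12 * iP^2 * \<kappa>^6 * 3"
    and "8 * iP * \<kappa>^4 * (3 * iP * \<kappa>^2) = 12 * iP^2 * \<kappa>^6 * 2"
    by (simp_all add: eval_nat_numeral algebra_simps)
  hence k: "K2 * c^2 = C * 3" "J2 * c = C * 2"
    unfolding c_def K2_def J2_def C_def by (metis rcst_mult rcst_power rcst_numeral)+
  have "Vop S $ 0 = - c * u" and "Vop (Vop S) $ 0 = c^2 * (rX * rderiv u)"
    using Vop_nth_0[of S] Vop_nth_0[of "Vop S"] by (simp_all add: u c_def power2_eq_square)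
  hence "pde_poly S $ 2 = S $ 0 * ((K2 * c^2) * (rX * rderiv u) + (J2 * c) * u) - (K2 * c^2) * u^2"
    unfolding pde_poly_nth_2 Kpol_nth_2 Jpol_nth_2 K2_def[symmetric] J2_def[symmetric]
    by (simp add: algebra_simps power2_eq_square)
  also have "\<dots> = C * (S $ 0 * (3 * rX * rderiv u + 2 * u) - 3 * u^2)"
    unfolding k by (simp add: algebra_simps)
  finally show ?thesis by (simp only: C_def)
qed

lemma pde_poly_nth_2_const: "S $ 0 = rcst q \<Longrightarrow> pde_poly S $ 2 = 0"
  by (simp add: pde_poly_nth_2_eq[OF refl])

lemma leading_coeff_const:
  assumes "pde_poly S $ 2 = 0" and nz: "S $ 0 \<noteq> 0"
  obtains q where "q \<noteq> 0" and "S $ 0 = rcst q"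
proof -
  have "rcst (12 * iP^2 * \<kappa>^6) \<noteq> 0"
    using iP_nonzero \<kappa>_nonzero by (simp only: rcst_eq_0_iff) simp
  hence "S $ 0 * (3 * rX * rderiv (rX * rderiv (S $ 0)) + 2 * (rX * rderiv (S $ 0)))
      - 3 * (rX * rderiv (S $ 0))^2 = 0"
    using assms(1) pde_poly_nth_2_eq[OF refl, of S] by simp
  hence "rderiv (S $ 0) = 0" using nz by (rule rderiv_eq_0_of_leading_ode[OF _ refl])
  then obtain q where "S $ 0 = rcst q" by (rule rderiv_eq_0_imp_const)
  thus ?thesis using nz that by auto
qed

lemma pde_poly_add_diff:
  "pde_poly (T + U) - pde_poly T = T * Kpol * Vop (Vop U) - T * Jpol * Vop U
     + U * (Kpol * Vop (Vop T) - Jpol * Vop T) + U * (Kpol * Vop (Vop U) - Jpol * Vop U)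
     - Kpol * (Vop U * (2 * Vop T + Vop U))
     + (fps_rcst (256 * p^2 / 3) * Epol^2 * fps_X^3) * (U * (3 * T^2 + 3 * T * U + U^2))"
  unfolding pde_poly_def Vop_add by (simp add: power2_eq_square power3_eq_cube algebra_simps)

lemma pde_poly_add_nth:
  assumes m: "m \<ge> 1" and U: "ord_ge m U" and T: "Vop T $ 0 = 0"
  shows "(pde_poly (T + U) - pde_poly T) $ (m + 2)
    = T $ 0 * (Kpol $ 2 * Vop (Vop U) $ m - Jpol $ 2 * Vop U $ m)"
proof -
  have VT: "ord_ge 1 (Vop T)" using T by (simp add: ord_ge_def)
  have VVT: "ord_ge 1 (Vop (Vop T))" by (rule Vop_ord_ge[OF VT])
  have VU: "ord_ge m (Vop U)" and VVU: "ord_ge m (Vop (Vop U))" by (intro Vop_ord_ge U)+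
  have e1: "(T * Kpol * Vop (Vop U)) $ (m + 2) = T $ 0 * Kpol $ 2 * Vop (Vop U) $ m"
    using ord_ge_mult_nth[OF ord_ge_mult_nth(1)[OF ord_ge_0 Kpol_ord_ge] VVU]
      ord_ge_mult_nth(2)[OF ord_ge_0 Kpol_ord_ge, of T] by (simp add: add.commute)
  have e2: "(T * Jpol * Vop U) $ (m + 2) = T $ 0 * Jpol $ 2 * Vop U $ m"
    using ord_ge_mult_nth[OF ord_ge_mult_nth(1)[OF ord_ge_0 Jpol_ord_ge] VU]
      ord_ge_mult_nth(2)[OF ord_ge_0 Jpol_ord_ge, of T] by (simp add: add.commute)
  have "ord_ge 3 (Kpol * Vop (Vop T) - Jpol * Vop T)"
    by (intro ord_ge_diff ord_ge_mult[OF Kpol_ord_ge VVT] ord_ge_mult[OF Jpol_ord_ge VT]) simp_all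
  hence e3: "(U * (Kpol * Vop (Vop T) - Jpol * Vop T)) $ (m + 2) = 0"
    by (rule ord_ge_nth[OF ord_ge_mult_nth(1)[OF U]]) simp
  have "ord_ge (2 + m) (Kpol * Vop (Vop U) - Jpol * Vop U)"
    by (intro ord_ge_diff ord_ge_mult[OF Kpol_ord_ge VVU] ord_ge_mult[OF Jpol_ord_ge VU]) simp_all
  from ord_ge_mult_nth(1)[OF U this]
  have e4: "(U * (Kpol * Vop (Vop U) - Jpol * Vop U)) $ (m + 2) = 0"
    by (rule ord_ge_nth) (use m in simp)
  have "ord_ge 1 (2 * Vop T + Vop U)"
    using m by (intro ord_ge_add ord_ge_mult[OF ord_ge_0 VT] ord_ge_mono[OF VU]) simp_all
  from ord_ge_mult_nth(1)[OF VU this]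
  have e5: "(Kpol * (Vop U * (2 * Vop T + Vop U))) $ (m + 2) = 0"
    by (rule ord_ge_nth[OF ord_ge_mult_nth(1)[OF Kpol_ord_ge]]) simp
  have e6: "((fps_rcst (256 * p^2 / 3) * Epol^2 * fps_X^3) * (U * (3 * T^2 + 3 * T * U + U^2))) $ (m + 2) = 0"
    by (rule ord_ge_nth[OF ord_ge_mult_nth(1)[OF cubic_term_ord_ge ord_ge_mult_nth(1)[OF U ord_ge_0]]]) simp
  show ?thesis
    unfolding pde_poly_add_diff by (simp only: fps_add_nth fps_sub_nth e1 e2 e3 e4 e5 e6) (simp add: algebra_simps)
qed

lemma pde_poly_nth_linear:
  assumes m: "m \<ge> 1" and S0: "S $ 0 = rcst q"
  shows "pde_poly S $ (m + 2) = pde_poly (fps_cutoff m S) $ (m + 2) + rcst (4 * q * iP^2 * \<kappa>^6) * euler2 m (S $ m)"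
proof -
  define U where "U = S - fps_cutoff m S"
  have U: "ord_ge m U" by (simp add: ord_ge_def U_def)
  have T0: "Vop (fps_cutoff m S) $ 0 = 0" using m S0 by (simp add: Vop_nth_0)
  have "pde_poly S $ (m + 2) - pde_poly (fps_cutoff m S) $ (m + 2)
      = (pde_poly (fps_cutoff m S + U) - pde_poly (fps_cutoff m S)) $ (m + 2)"
    by (simp add: U_def)
  also have "\<dots> = rcst q * (Kpol $ 2 * Vop (Vop U) $ m - Jpol $ 2 * Vop U $ m)"
    using pde_poly_add_nth[OF m U T0] m S0 by simp
  also have "\<dots> = rcst (4 * q * iP^2 * \<kappa>^6) * euler2 m (S $ m)"
  proof -
    have VU: "Vop U $ m = rcst (4 * iP * \<kappa>^2) * (of_nat m * S $ m) - rcst (3 * iP * \<kappa>^2) * (rX * rderiv (S $ m))"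
      using Vop_nth_ord[OF U] by (simp add: U_def)
    show ?thesis
      unfolding Vop_nth_ord[OF Vop_ord_ge[OF U]] VU Kpol_nth_2 Jpol_nth_2 euler2_def
      by (simp add: eval_nat_numeral algebra_simps)
  qed
  finally show ?thesis by (simp add: algebra_simps)
qed

definition Vop_fls :: "ratfun fls \<Rightarrow> ratfun fls" where
  "Vop_fls F = fps_to_fls (fps_rcst (4 * iP) * Epol * fps_X) * fls_deriv F
    - fps_to_fls (fps_const rX * Wpol) * xderiv F"

lemma Vop_fls_fps_to_fls: "Vop_fls (fps_to_fls S) = fps_to_fls (Vop S)"
  unfolding Vop_fls_def Vop_def y_dy_eq x_dx_eq
  by (simp add: fls_deriv_fps_to_fls xderiv_fps_to_fls fls_times_fps_to_fls algebra_simps)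

lemma Vop_fls_mult: "Vop_fls (F * G) = Vop_fls F * G + F * Vop_fls G"
  unfolding Vop_fls_def by (simp add: algebra_simps)

lemma Vop_fls_inverse:
  assumes "F \<noteq> 0"
  shows "Vop_fls (1 / F) = - Vop_fls F / F^2"
proof -
  have "0 = Vop_fls (F * (1 / F))" using assms by (simp add: Vop_fls_def)
  also have "\<dots> = Vop_fls F * (1 / F) + F * Vop_fls (1 / F)" by (rule Vop_fls_mult)
  finally show ?thesis using assms by (auto simp: field_simps power2_eq_square add_eq_0_iff)
qed

lemma Vop_mult: "Vop (X * Y) = Vop X * Y + X * Vop Y"
proof -
  have "fps_to_fls (Vop (X * Y)) = fps_to_fls (Vop X * Y + X * Vop Y)"
    using Vop_fls_mult[of "fps_to_fls X" "fps_to_fls Y"]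
    by (simp add: Vop_fls_fps_to_fls fls_times_fps_to_fls flip: fls_times_fps_to_fls)
  thus ?thesis by (metis fps_to_fls_eq_iff fps_to_fls_plus)
qed

lemma Vop_xsq_Kpol: "Vop (xsq * Kpol) = xsq * Jpol"
  unfolding Vop_mult Jpol_def by (simp add: Vop_def algebra_simps)

lemma fls_Epol_eq: "fps_to_fls Epol = 4 * fls_X + fls_const (rcst (\<kappa>^2)) * (fls_X - 1)^2"
  unfolding Epol_def
  by (simp add: fls_times_fps_to_fls fls_const_simps power2_eq_square algebra_simps
      del: fls_const_mult_const)

lemma fls_Epol_nonzero: "fps_to_fls Epol \<noteq> 0"
proof -
  have "Epol $ 0 \<noteq> 0" using \<kappa>_nonzero by simp
  thus ?thesis by (metis fps_nonzeroI fps_to_fls_eq_0_iff)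
qed

lemma fls_xsq_Kpol_eq: "fps_to_fls (xsq * Kpol) = fls_const rX ^ 2 * 4 * fps_to_fls Epol * fls_X ^ 2"
  unfolding Kpol_def
  by (simp add: fls_times_fps_to_fls fps_to_fls_power fls_const_simps del: fls_const_mult_const)

lemma fls_xsq_Kpol_nonzero: "fps_to_fls (xsq * Kpol) \<noteq> 0"
  unfolding fls_xsq_Kpol_eq using fls_Epol_nonzero by (simp add: fls_const_nonzero)

lemma Vop_fls_eq:
  "Vop_fls F = 4 * fls_const (rcst iP) * fps_to_fls Epol * fls_X * fls_deriv F
     - fls_const rX * (2 * fps_to_fls Epol * fls_const rX ^ 2 * fls_X ^ 2
        + fls_const (rcst iP) * (4 * fps_to_fls Epol + fls_const (rcst (\<kappa>^2)) * (fls_X ^ 2 - 1))) * xderiv F"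
proof -
  have "fps_to_fls (fps_rcst (4 * iP) * Epol * fps_X) = 4 * fls_const (rcst iP) * fps_to_fls Epol * fls_X"
    by (simp add: fls_times_fps_to_fls fls_const_simps del: fls_const_mult_const)
  moreover have "fps_to_fls (fps_const rX * Wpol) = fls_const rX * (2 * fps_to_fls Epol * fls_const rX ^ 2 * fls_X ^ 2
      + fls_const (rcst iP) * (4 * fps_to_fls Epol + fls_const (rcst (\<kappa>^2)) * (fls_X ^ 2 - 1)))"
    unfolding Wpol_def
    by (simp add: fls_times_fps_to_fls fls_Epol_eq fls_const_simps power2_eq_square algebra_simps
        del: fls_const_mult_const)
  ultimately show ?thesis by (simp add: Vop_fls_def)
qed

lemma opD_eq: "opD P \<kappa> F = 1 / fps_to_fls (xsq * Kpol) * Vop_fls F"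
proof -
  define E x A k2 where "E = fps_to_fls Epol" and "x = fls_const rX"
    and "A = fls_const (rcst iP)" and "k2 = fls_const (rcst (\<kappa>^2))"
  have E0: "E \<noteq> 0" using fls_Epol_nonzero by (simp add: E_def)
  have x0: "x \<noteq> 0" by (simp add: x_def fls_const_nonzero)
  have EE: "4 * fls_X + k2 * (fls_X - 1)^2 = E" by (simp add: E_def fls_Epol_eq k2_def)
  have ia: "fls_const (rcst (\<i> * P)) = A" by (simp add: iP_def A_def)
  have "opD P \<kappa> F = A / (x^2 * fls_X) * fls_deriv F
     - (x / 2 + (A / (x * fls_X^2)) * (1 + k2 * (fls_X^2 - 1) / (4 * E))) * xderiv F"
    unfolding opD_def ia x_def[symmetric] k2_def[symmetric] EE by simp
  also have "\<dots> = 1 / (x ^ 2 * 4 * E * fls_X ^ 2) * (4 * A * E * fls_X * fls_deriv F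
     - x * (2 * E * x ^ 2 * fls_X ^ 2 + A * (4 * E + k2 * (fls_X ^ 2 - 1))) * xderiv F)"
    using E0 x0 by (simp add: field_simps power2_eq_square)
  also have "\<dots> = 1 / fps_to_fls (xsq * Kpol) * Vop_fls F"
    unfolding Vop_fls_eq fls_xsq_Kpol_eq E_def[symmetric] x_def[symmetric] A_def[symmetric] k2_def[symmetric]
    by simp
  finally show ?thesis .
qed

lemma pde_rhs_eq:
  "- fls_const (rcst (p^2)) / (3 * fls_const rX ^ 4 * fls_X ^ 4 *
      (1 + fls_const (rcst (\<kappa>^2)) * (fls_X - 1)^2 / (4 * fls_X)))
   = - fps_to_fls (xsq * fps_rcst (256 * p^2 / 3) * Epol^2 * fps_X^3) / fps_to_fls (xsq * Kpol) ^ 3"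
proof -
  define E x pp k2 where "E = fps_to_fls Epol" and "x = fls_const rX"
    and "pp = fls_const (rcst (p^2))" and "k2 = fls_const (rcst (\<kappa>^2))"
  have E0: "E \<noteq> 0" using fls_Epol_nonzero by (simp add: E_def)
  have x0: "x \<noteq> 0" by (simp add: x_def fls_const_nonzero)
  have "4 * fls_X + k2 * (fls_X - 1)^2 = E" by (simp add: E_def fls_Epol_eq k2_def)
  hence one: "1 + k2 * (fls_X - 1)^2 / (4 * fls_X) = E / (4 * fls_X)"
    by (simp add: field_simps)
  have c: "fls_const (rcst (256 * p^2 / 3)) = 256 * pp / 3"
    by (simp add: pp_def rcst_divide fls_const_divide_const[symmetric] fls_const_simps del: fls_const_mult_const)
  have F1: "fps_to_fls (xsq * fps_rcst (256 * p^2 / 3) * Epol^2 * fps_X^3) = x^2 * (256 * pp / 3) * E^2 * fls_X^3"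
    by (simp add: fls_times_fps_to_fls fps_to_fls_power x_def E_def c)
  have F2: "fps_to_fls (xsq * Kpol) = x^2 * 4 * E * fls_X^2" by (simp add: fls_xsq_Kpol_eq x_def E_def)
  show ?thesis
    unfolding pp_def[symmetric] k2_def[symmetric] x_def[symmetric] one F1 F2
    using E0 x0 by (simp add: field_simps eval_nat_numeral)
qed

lemma pde_lhs_eq:
  "fps_to_fls S * opD P \<kappa> (opD P \<kappa> (fps_to_fls S)) - (opD P \<kappa> (fps_to_fls S))^2
     = fps_to_fls (xsq * (Kpol * S * Vop (Vop S) - S * Jpol * Vop S - Kpol * (Vop S)^2))
       / fps_to_fls (xsq * Kpol) ^ 3"
proof -
  define Sf H VS VVS J where "Sf = fps_to_fls S" and "H = fps_to_fls (xsq * Kpol)"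
    and "VS = fps_to_fls (Vop S)" and "VVS = fps_to_fls (Vop (Vop S))" and "J = fps_to_fls (xsq * Jpol)"
  have H: "H \<noteq> 0" using fls_xsq_Kpol_nonzero by (simp add: H_def)
  have D1: "opD P \<kappa> Sf = 1 / H * VS"
    by (simp add: opD_eq Sf_def H_def VS_def Vop_fls_fps_to_fls)
  have "Vop_fls (1 / H) = - J / H^2"
    using Vop_fls_inverse[OF H] by (simp add: H_def J_def Vop_fls_fps_to_fls Vop_xsq_Kpol)
  moreover have "Vop_fls VS = VVS" by (simp add: VS_def VVS_def Vop_fls_fps_to_fls)
  moreover have "opD P \<kappa> (1 / H * VS) = 1 / H * (Vop_fls (1 / H) * VS + 1 / H * Vop_fls VS)"
    by (simp only: opD_eq H_def[symmetric] Vop_fls_mult)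
  ultimately have D2: "opD P \<kappa> (1 / H * VS) = 1 / H * (- J / H^2 * VS + 1 / H * VVS)"
    by simp
  have "Sf * opD P \<kappa> (opD P \<kappa> Sf) - (opD P \<kappa> Sf)^2 = (H * Sf * VVS - Sf * J * VS - H * VS^2) / H^3"
    unfolding D1 D2 using H by (simp add: field_simps power2_eq_square eval_nat_numeral)
  also have "H * Sf * VVS - Sf * J * VS - H * VS^2
      = fps_to_fls (xsq * (Kpol * S * Vop (Vop S) - S * Jpol * Vop S - Kpol * (Vop S)^2))"
    by (simp add: H_def Sf_def VS_def VVS_def J_def fls_times_fps_to_fls fps_to_fls_power algebra_simps)
  finally show ?thesis by (simp only: Sf_def H_def)
qed

theorem formal_sol_iff: "formal_sol P p \<kappa> S \<longleftrightarrow> pde_poly S = 0"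
proof -
  define H L R where "H = fps_to_fls (xsq * Kpol)"
    and "L = Kpol * S * Vop (Vop S) - S * Jpol * Vop S - Kpol * (Vop S)^2"
    and "R = xsq * fps_rcst (256 * p^2 / 3) * Epol^2 * fps_X^3"
  have H: "H \<noteq> 0" using fls_xsq_Kpol_nonzero by (simp add: H_def)
  have "formal_sol P p \<kappa> S \<longleftrightarrow> fps_to_fls (xsq * L) / H^3 = - fps_to_fls (R * (S^3 - 1)) / H^3"
    unfolding formal_sol_def Let_def pde_lhs_eq pde_rhs_eq
    by (simp add: H_def L_def R_def fls_times_fps_to_fls fps_to_fls_power)
  also have "\<dots> \<longleftrightarrow> xsq * L + R * (S^3 - 1) = 0"
    using H by (simp add: field_simps eq_neg_iff_add_eq_0 flip: fps_to_fls_eq_0_iff)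
  also have "xsq * L + R * (S^3 - 1) = xsq * pde_poly S"
    by (simp add: L_def R_def pde_poly_def algebra_simps)
  finally show ?thesis by (simp add: xsq_def)
qed

lemma formal_solE:
  assumes "formal_sol P p \<kappa> A" and "A $ 0 \<noteq> 0"
  obtains q where "q \<noteq> 0" and "A $ 0 = rcst q" and "pde_poly A = 0"
proof -
  have "pde_poly A = 0" using assms(1) by (simp add: formal_sol_iff)
  moreover from this have "pde_poly A $ 2 = 0" by simp
  ultimately show ?thesis using leading_coeff_const[OF _ assms(2)] that by metis
qed

end

section \<open>Solving the equation order by order\<close>

fun cov_list :: "(nat \<Rightarrow> (nat \<Rightarrow> 'a) \<Rightarrow> 'a) \<Rightarrow> nat \<Rightarrow> 'a list" where
  "cov_list F 0 = []"
| "cov_list F (Suc j) = cov_list F j @ [F j (\<lambda>i. cov_list F j ! i)]"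

definition cov_rec :: "(nat \<Rightarrow> (nat \<Rightarrow> 'a) \<Rightarrow> 'a) \<Rightarrow> nat \<Rightarrow> 'a" where
  "cov_rec F j = cov_list F (Suc j) ! j"

lemma length_cov_list [simp]: "length (cov_list F j) = j"
  by (induction j) simp_all

lemma cov_list_nth: "i < j \<Longrightarrow> cov_list F j ! i = cov_rec F i"
proof (induction j)
  case (Suc j)
  show ?case
  proof (cases "i < j")
    case True
    thus ?thesis using Suc by (simp add: nth_append)
  next
    case False
    hence "i = j" using Suc.prems by simp
    thus ?thesis by (simp add: cov_rec_def)
  qed
qed simp

lemma cov_rec_eq:
  assumes "\<And>g h. (\<And>i. i < j \<Longrightarrow> g i = h i) \<Longrightarrow> F j g = F j h"
  shows "cov_rec F j = F j (cov_rec F)"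
proof -
  have "cov_rec F j = F j (\<lambda>i. cov_list F j ! i)" by (simp add: cov_rec_def nth_append)
  also have "\<dots> = F j (cov_rec F)" by (rule assms) (simp add: cov_list_nth)
  finally show ?thesis .
qed

context pde_params
begin

definition lead_factor :: "complex \<Rightarrow> complex" where
  "lead_factor q = 4 * q * iP^2 * \<kappa>^6"

lemma lead_factor_nonzero: "q \<noteq> 0 \<Longrightarrow> lead_factor q \<noteq> 0"
  using iP_nonzero \<kappa>_nonzero by (simp add: lead_factor_def)

definition residual :: "nat \<Rightarrow> (nat \<Rightarrow> ratfun) \<Rightarrow> ratfun" where
  "residual j f = pde_poly (Abs_fps (\<lambda>i. if i < j then f i else 0)) $ (j + 2)"

lemma residual_eq: "residual j (fps_nth S) = pde_poly (fps_cutoff j S) $ (j + 2)"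
  by (simp add: residual_def fps_cutoff_def)

lemma residual_cong: "(\<And>i. i < j \<Longrightarrow> f i = g i) \<Longrightarrow> residual j f = residual j g"
  unfolding residual_def by (rule arg_cong[of _ _ "\<lambda>X. pde_poly X $ (j + 2)"]) (rule fps_ext, simp)

lemma pde_poly_eq_0_iff:
  assumes S0: "S $ 0 = rcst q"
  shows "pde_poly S = 0 \<longleftrightarrow> (\<forall>m\<ge>1. rcst (lead_factor q) * euler2 m (S $ m) = - residual m (fps_nth S))"
proof -
  have lin: "pde_poly S $ (m + 2) = residual m (fps_nth S) + rcst (lead_factor q) * euler2 m (S $ m)"
    if "m \<ge> 1" for m
    using pde_poly_nth_linear[OF that S0] by (simp add: residual_eq lead_factor_def)
  have low: "pde_poly S $ n = 0" if "n \<le> 2" for n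
    using pde_poly_ord_ge_2 pde_poly_nth_2_const[OF S0] that
    by (cases "n = 2") (auto simp: ord_ge_def)
  show ?thesis
  proof
    assume "pde_poly S = 0"
    thus "\<forall>m\<ge>1. rcst (lead_factor q) * euler2 m (S $ m) = - residual m (fps_nth S)"
      using lin by (auto simp: eq_neg_iff_add_eq_0 add.commute)
  next
    assume eq: "\<forall>m\<ge>1. rcst (lead_factor q) * euler2 m (S $ m) = - residual m (fps_nth S)"
    show "pde_poly S = 0"
    proof (rule fps_ext)
      fix n
      show "pde_poly S $ n = 0 $ n"
      proof (cases "n \<le> 2")
        case False
        hence "n = (n - 2) + 2" "n - 2 \<ge> 1" by simp_all
        then obtain m where "n = m + 2" "m \<ge> 1" by blast
        thus ?thesis using lin eq by simp
      qed (simp add: low)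
    qed
  qed
qed

lemma residual_weight:
  assumes "fps_weight_le 0 (fps_cutoff m S)"
  obtains \<phi> where "residual m (fps_nth S) = to_fract \<phi>" and "weight_le (- 12) (m + 2) \<phi>"
  using fps_weight_le_pde_poly[OF assms] unfolding fps_weight_le_def residual_eq by blast

lemma coeff_weight_le_0:
  assumes S0: "S $ 0 = rcst q" and q: "q \<noteq> 0"
    and eq: "\<And>m. 1 \<le> m \<Longrightarrow> m \<le> n \<Longrightarrow> rcst (lead_factor q) * euler2 m (S $ m) = - residual m (fps_nth S)"
  shows "1 \<le> k \<Longrightarrow> k \<le> n \<Longrightarrow> \<exists>a. S $ k = to_fract a \<and> weight_le 0 k a"
proof (induction k rule: less_induct)
  case (less k)
  have "fps_weight_le 0 (fps_cutoff k S)" by (rule fps_weight_le_cutoff[OF S0]) (use less in auto)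
  then obtain \<phi> where \<phi>: "residual k (fps_nth S) = to_fract \<phi>" "weight_le (- 12) (k + 2) \<phi>"
    by (rule residual_weight)
  have "rcst (lead_factor q) * euler2 k (S $ k) = - to_fract \<phi>"
    using eq[OF less.prems] \<phi>(1) by simp
  thus ?case
    using euler2_weight_solution[OF less.prems(1) lead_factor_nonzero[OF q] _ \<phi>(2)] by blast
qed

lemma solution_coeff:
  assumes "pde_poly S = 0" and S0: "S $ 0 = rcst q" and q: "q \<noteq> 0" and k: "k \<ge> 1"
  obtains a \<phi> where "S $ k = to_fract a" and "weight_le 0 k a"
    and "residual k (fps_nth S) = to_fract \<phi>" and "weight_le (- 12) (k + 2) \<phi>"
    and "smult (lead_factor q) (euler2_poly k a) = - \<phi>"
proof -
  have eq: "rcst (lead_factor q) * euler2 m (S $ m) = - residual m (fps_nth S)" if "m \<ge> 1" for m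
    using assms(1) pde_poly_eq_0_iff[OF S0] that by blast
  have "fps_weight_le 0 (fps_cutoff k S)"
    by (rule fps_weight_le_cutoff[OF S0 coeff_weight_le_0[OF S0 q eq]]) auto
  then obtain \<phi> where \<phi>: "residual k (fps_nth S) = to_fract \<phi>" "weight_le (- 12) (k + 2) \<phi>"
    by (rule residual_weight)
  have "rcst (lead_factor q) * euler2 k (S $ k) = - to_fract \<phi>"
    using eq[OF k] \<phi>(1) by simp
  then obtain a where "S $ k = to_fract a" "weight_le 0 k a"
      "smult (lead_factor q) (euler2_poly k a) = - \<phi>"
    by (rule euler2_weight_solution[OF k lead_factor_nonzero[OF q] _ \<phi>(2)])
  thus ?thesis using \<phi> that by blast
qed

lemma pde_poly_fps_rcst_nth_3: "pde_poly (fps_rcst q) $ 3 = rcst (256 * p^2 / 3 * (\<kappa>^2)^2 * (q^3 - 1))"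
proof -
  have "(fps_rcst (256 * p^2 / 3) * Epol^2 * fps_X^3) $ 3 = rcst (256 * p^2 / 3) * rcst (\<kappa>^2)^2"
    using ord_ge_mult_nth_left[OF ord_ge_X_power[of 3], of "fps_rcst (256 * p^2 / 3) * Epol^2"]
    by (simp add: fps_power_zeroth fps_X_power_nth del: rcst_power rcst_mult)
  hence "pde_poly (fps_rcst q) $ 3 = rcst (256 * p^2 / 3) * rcst (\<kappa>^2)^2 * (rcst q ^ 3 - 1)"
    using ord_ge_mult_nth_right[OF cubic_term_ord_ge, of "256 * p^2 / 3" "fps_rcst q ^ 3 - 1"]
    by (simp add: pde_poly_def fps_power_zeroth del: rcst_power rcst_mult)
  thus ?thesis by (simp only: rcst_mult rcst_power rcst_diff rcst_1)
qed

lemma second_coeff: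
  assumes "formal_sol P p \<kappa> A" and "A $ 0 \<noteq> 0"
  shows "\<exists>q. q \<noteq> 0 \<and> A $ 0 = rcst q \<and> A $ 1 = rcst (8 * p^2 * (q^3 - 1) / (3 * P^2 * \<kappa>^2 * q))"
proof -
  obtain q where q: "q \<noteq> 0" and A: "pde_poly A = 0" "A $ 0 = rcst q" using formal_solE[OF assms] by metis
  obtain a \<phi> where a: "A $ 1 = to_fract a" "weight_le 0 1 a"
    and \<phi>: "residual 1 (fps_nth A) = to_fract \<phi>" "smult (lead_factor q) (euler2_poly 1 a) = - \<phi>"
    using solution_coeff[OF A q order_refl] by blast
  have "coeff a n = 0" if "n \<noteq> 0" for n
  proof (rule ccontr)
    assume "coeff a n \<noteq> 0"
    hence "even n" "3 * int n \<le> 4" using a(2) by (auto simp: weight_le_def)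
    thus False using that by presburger
  qed
  hence a0: "a = [:coeff a 0:]" by (intro poly_eqI) (auto simp: coeff_pCons split: nat.splits)
  have "euler2_poly 1 a = [:8 * coeff a 0:]"
    by (subst a0, rule poly_eqI) (simp add: coeff_euler2_poly coeff_pCons split: nat.splits)
  moreover have "fps_cutoff 1 A = fps_rcst q" using A(2) by (intro fps_ext) simp
  hence "residual 1 (fps_nth A) = pde_poly (fps_rcst q) $ 3"
    using residual_eq[of 1 A] by (simp add: numeral_3_eq_3)
  hence "to_fract \<phi> = to_fract [:256 * p^2 / 3 * (\<kappa>^2)^2 * (q^3 - 1):]"
    using \<phi>(1) by (simp only: pde_poly_fps_rcst_nth_3 rcst_def)
  hence "\<phi> = [:256 * p^2 / 3 * (\<kappa>^2)^2 * (q^3 - 1):]" by (simp only: to_fract_eq_iff)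
  ultimately have "lead_factor q * (8 * coeff a 0) = - (256 * p^2 / 3 * (\<kappa>^2)^2 * (q^3 - 1))"
    using \<phi>(2) by simp
  moreover define v where "v = 8 * p^2 * (q^3 - 1) / (3 * P^2 * \<kappa>^2 * q)"
  have "lead_factor q * (8 * v) = - (256 * p^2 / 3 * (\<kappa>^2)^2 * (q^3 - 1))"
    using q P_nonzero \<kappa>_nonzero
    by (simp add: v_def lead_factor_def iP_def power_mult_distrib field_simps eval_nat_numeral)
  ultimately have "lead_factor q * (8 * coeff a 0) = lead_factor q * (8 * v)"
    by simp
  hence "coeff a 0 = v" using lead_factor_nonzero[OF q] by simp
  thus ?thesis using q A(2) a(1) a0 by (simp add: rcst_def v_def)
qed

text \<open>\<open>q\<close> is read off from \<open>f 0 = rcst q\<close>. The value \<open>0\<close> at \<open>k = 0\<close> is junk, chosen so that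
  \<open>rhs_poly k f\<close> depends only on \<open>f 0, \<dots>, f (k - 1)\<close> for every \<open>k\<close>.\<close>

definition rhs_poly :: "nat \<Rightarrow> (nat \<Rightarrow> ratfun) \<Rightarrow> complex poly" where
  "rhs_poly k f = (if k = 0 then 0 else
     (let q = coeff (fst (quot_of_fract (f 0))) 0
      in smult (- (P^(2*k) * \<kappa>^(2*k) * q^(2*k-1)) / lead_factor q) (fst (quot_of_fract (residual k f)))))"

lemma rhs_poly_cong: "(\<forall>j<k. f j = g j) \<Longrightarrow> rhs_poly k f = rhs_poly k g"
  using residual_cong[of k f g] by (cases "k = 0") (simp_all add: rhs_poly_def)

lemma coeff_structure:
  assumes "formal_sol P p \<kappa> A" and "A $ 0 \<noteq> 0" and k: "k \<ge> 1"
  shows "\<exists>a q. A $ 0 = rcst q \<and> A $ k = to_fract a \<and> even_poly_le a (2 * (Nk k + 1)) \<and>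
    (k mod 3 = 1 \<longrightarrow> coeff a (2 * (Nk k + 1)) = 0) \<and>
    even_poly_le (rhs_poly k (fps_nth A)) (2 * Nk k) \<and>
    smult (P^(2*k) * \<kappa>^(2*k) * q^(2*k - 1)) (euler2_poly k a) = rhs_poly k (fps_nth A)"
proof -
  obtain q where q: "q \<noteq> 0" and A: "pde_poly A = 0" "A $ 0 = rcst q" using formal_solE[OF assms(1,2)] by metis
  obtain a \<phi> where a: "A $ k = to_fract a" "weight_le 0 k a"
    and \<phi>: "residual k (fps_nth A) = to_fract \<phi>" "weight_le (- 12) (k + 2) \<phi>"
      "smult (lead_factor q) (euler2_poly k a) = - \<phi>"
    using solution_coeff[OF A q k] by blast
  have R: "rhs_poly k (fps_nth A) = smult (- (P^(2*k) * \<kappa>^(2*k) * q^(2*k-1)) / lead_factor q) \<phi>"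
    using k A(2) \<phi>(1) by (simp add: rhs_poly_def rcst_def)
  have "\<phi> = - smult (lead_factor q) (euler2_poly k a)" using \<phi>(3) by simp
  hence "smult (P^(2*k) * \<kappa>^(2*k) * q^(2*k - 1)) (euler2_poly k a) = rhs_poly k (fps_nth A)"
    unfolding R using lead_factor_nonzero[OF q] by simp
  thus ?thesis
    using A(2) a even_poly_le_of_weight_le_0 top_coeff_of_weight_le_0
      even_poly_le_of_weight_le_residual[OF \<phi>(2) k]
    unfolding R by blast
qed

lemma coeff_unique:
  assumes "formal_sol P p \<kappa> A" and "A $ 0 \<noteq> 0" and "formal_sol P p \<kappa> B"
    and k: "k \<ge> 1" and agree: "\<forall>j<k. A $ j = B $ j" and m: "m \<le> Nk k"
  shows "xcoeff (A $ k) (2 * m) = xcoeff (B $ k) (2 * m)"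
proof -
  obtain q where q: "q \<noteq> 0" and A: "pde_poly A = 0" "A $ 0 = rcst q" using formal_solE[OF assms(1,2)] by metis
  have B: "pde_poly B = 0" using assms(3) by (simp add: formal_sol_iff)
  have B0: "B $ 0 = rcst q" using agree k A(2) by auto
  obtain a \<phi> where a: "A $ k = to_fract a" "residual k (fps_nth A) = to_fract \<phi>"
      "smult (lead_factor q) (euler2_poly k a) = - \<phi>"
    using solution_coeff[OF A q k] by blast
  obtain b \<psi> where b: "B $ k = to_fract b" "residual k (fps_nth B) = to_fract \<psi>"
      "smult (lead_factor q) (euler2_poly k b) = - \<psi>"
    using solution_coeff[OF B B0 q k] by blast
  have "residual k (fps_nth A) = residual k (fps_nth B)" by (rule residual_cong) (use agree in simp)
  hence "smult (lead_factor q) (euler2_poly k a) = smult (lead_factor q) (euler2_poly k b)"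
    using a b by simp
  hence "coeff (euler2_poly k a) (2 * m) = coeff (euler2_poly k b) (2 * m)"
    using smult_cancel[OF lead_factor_nonzero[OF q]] by metis
  hence "coeff a (2 * m) = coeff b (2 * m)"
    using euler2_factor_eq_0_iff[of "2 * m" k] Nk_nonresonant[OF m k] by (simp add: coeff_euler2_poly)
  thus ?thesis using a(1) b(1) by simp
qed

lemma solution_extension:
  assumes S0: "S $ 0 = rcst q" and q: "q \<noteq> 0"
    and low: "\<And>m. 1 \<le> m \<Longrightarrow> m \<le> k \<Longrightarrow> rcst (lead_factor q) * euler2 m (S $ m) = - residual m (fps_nth S)"
    and high: "\<And>m. k < m \<Longrightarrow>
      S $ m = to_fract (euler2_poly_inv m (smult (- 1 / lead_factor q) (fst (quot_of_fract (residual m (fps_nth S))))))"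
  shows "pde_poly S = 0"
  unfolding pde_poly_eq_0_iff[OF S0]
proof (intro allI impI)
  fix m :: nat assume "m \<ge> 1"
  thus "rcst (lead_factor q) * euler2 m (S $ m) = - residual m (fps_nth S)"
  proof (induction m rule: less_induct)
    case (less m)
    show ?case
    proof (cases "m \<le> k")
      case False
      have "rcst (lead_factor q) * euler2 j (S $ j) = - residual j (fps_nth S)"
        if "1 \<le> j" "j \<le> m - 1" for j
        using less.IH that by simp
      hence "fps_weight_le 0 (fps_cutoff m S)"
        using coeff_weight_le_0[OF S0 q, of "m - 1"] by (intro fps_weight_le_cutoff[OF S0]) simp
      then obtain \<phi> where \<phi>: "residual m (fps_nth S) = to_fract \<phi>" "weight_le (- 12) (m + 2) \<phi>"
        by (rule residual_weight)
      define g where "g = smult (- 1 / lead_factor q) \<phi>"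
      have "euler2_poly m (euler2_poly_inv m g) = g"
        by (rule euler2_poly_inv) (use \<phi>(2) in \<open>auto simp: g_def weight_le_def\<close>)
      moreover have "S $ m = to_fract (euler2_poly_inv m g)"
        using high[of m] False \<phi>(1) by (simp add: g_def)
      ultimately have "euler2 m (S $ m) = to_fract g" by (simp flip: to_fract_euler2_poly)
      thus ?thesis
        using \<phi>(1) lead_factor_nonzero[OF q] by (simp add: g_def to_fract_smult rcst_divide)
    qed (use low less.prems in blast)
  qed
qed

lemma top_coeff_free:
  assumes "formal_sol P p \<kappa> A" and "A $ 0 \<noteq> 0" and k: "k \<ge> 1" "k mod 3 \<noteq> 1"
  shows "\<exists>B. formal_sol P p \<kappa> B \<and> B $ 0 \<noteq> 0 \<and> (\<forall>j<k. B $ j = A $ j) \<and> xcoeff (B $ k) (2 * (Nk k + 1)) = c"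
proof -
  obtain q where q: "q \<noteq> 0" and A: "pde_poly A = 0" "A $ 0 = rcst q" using formal_solE[OF assms(1,2)] by metis
  define n0 C where "n0 = 2 * (Nk k + 1)" and "C = lead_factor q"
  obtain a where a: "A $ k = to_fract a" using solution_coeff[OF A q k(1)] by blast
  define F where "F = (\<lambda>j f. if j < k then A $ j
    else if j = k then A $ k + to_fract (monom (c - coeff a n0) n0)
    else to_fract (euler2_poly_inv j (smult (- 1 / C) (fst (quot_of_fract (residual j f))))))"
  define B where "B = Abs_fps (cov_rec F)"
  have B: "B $ j = F j (fps_nth B)" for j
    unfolding B_def fps_nth_Abs_fps
  proof (rule cov_rec_eq)
    fix g h :: "nat \<Rightarrow> ratfun" assume "\<And>i. i < j \<Longrightarrow> g i = h i"
    thus "F j g = F j h" using residual_cong[of j g h] by (simp add: F_def)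
  qed
  have low: "B $ j = A $ j" if "j < k" for j using B[of j] that by (simp add: F_def)
  have B0: "B $ 0 = rcst q" using low[of 0] k A(2) by simp
  have "euler2 k (to_fract (monom (c - coeff a n0) n0)) = 0"
    using euler2_poly_monom_resonant[OF Nk_resonant[OF k]] by (simp add: n0_def flip: to_fract_euler2_poly)
  hence Bk: "euler2 k (B $ k) = euler2 k (A $ k)" using B[of k] by (simp add: F_def euler2_add)
  have "rcst C * euler2 m (B $ m) = - residual m (fps_nth B)" if "1 \<le> m" "m \<le> k" for m
  proof -
    have "residual m (fps_nth B) = residual m (fps_nth A)" using that low by (intro residual_cong) simp
    moreover have "euler2 m (B $ m) = euler2 m (A $ m)" using that low Bk by (cases "m = k") simp_all
    ultimately show ?thesis using A pde_poly_eq_0_iff[of A q] that by (simp add: C_def)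
  qed
  moreover have "B $ m = to_fract (euler2_poly_inv m (smult (- 1 / C) (fst (quot_of_fract (residual m (fps_nth B))))))"
    if "k < m" for m
    using B[of m] that by (simp add: F_def)
  ultimately have "pde_poly B = 0" by (intro solution_extension[OF B0 q]) (simp_all add: C_def)
  moreover have "xcoeff (B $ k) n0 = c" using B[of k] a by (simp add: F_def flip: to_fract_add)
  ultimately show ?thesis using q B0 low by (auto simp: formal_sol_iff n0_def)
qed

end

theorem mainTheorem11:
  fixes P p \<kappa> :: complex
  assumes "P \<noteq> 0" and "p \<noteq> 0" and "\<kappa> \<noteq> 0"
  shows
  "(\<forall>A. formal_sol P p \<kappa> A \<and> fps_nth A 0 \<noteq> 0 \<longrightarrow>
      (\<exists>q. q \<noteq> 0 \<and> fps_nth A 0 = rcst q \<and>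
           fps_nth A 1 = rcst (8 * p^2 * (q^3 - 1) / (3 * P^2 * \<kappa>^2 * q)))) \<and>
   (\<exists>Rf :: nat \<Rightarrow> (nat \<Rightarrow> ratfun) \<Rightarrow> complex poly.
      (\<forall>k f g. (\<forall>j<k. f j = g j) \<longrightarrow> Rf k f = Rf k g) \<and>
      (\<forall>A k. formal_sol P p \<kappa> A \<and> fps_nth A 0 \<noteq> 0 \<and> k \<ge> 1 \<longrightarrow>
         (\<exists>a q. fps_nth A 0 = rcst q \<and> fps_nth A k = to_fract a \<and>
            even_poly_le a (2 * (Nk k + 1)) \<and>
            (k mod 3 = 1 \<longrightarrow> coeff a (2 * (Nk k + 1)) = 0) \<and>
            even_poly_le (Rf k (\<lambda>j. fps_nth A j)) (2 * Nk k) \<and>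
            smult (P^(2*k) * \<kappa>^(2*k) * q^(2*k - 1))
              (smult 9 ([:0, 0, 1:] * pderiv (pderiv a))
               - smult (3 * (8 * of_nat k - 5)) ([:0, 1:] * pderiv a)
               + smult (8 * of_nat k * (2 * of_nat k - 1)) a)
            = Rf k (\<lambda>j. fps_nth A j)))) \<and>
   (\<forall>A B k. formal_sol P p \<kappa> A \<and> fps_nth A 0 \<noteq> 0 \<and> formal_sol P p \<kappa> B \<and> fps_nth B 0 \<noteq> 0 \<and>
      k \<ge> 1 \<and> (\<forall>j<k. fps_nth A j = fps_nth B j) \<longrightarrow>
      (\<forall>m \<le> Nk k. xcoeff (fps_nth A k) (2 * m) = xcoeff (fps_nth B k) (2 * m))) \<and>
   (\<forall>A k c. formal_sol P p \<kappa> A \<and> fps_nth A 0 \<noteq> 0 \<and> k \<ge> 1 \<and> k mod 3 \<noteq> 1 \<longrightarrow>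
      (\<exists>B. formal_sol P p \<kappa> B \<and> fps_nth B 0 \<noteq> 0 \<and> (\<forall>j<k. fps_nth B j = fps_nth A j) \<and>
           xcoeff (fps_nth B k) (2 * (Nk k + 1)) = c))"
proof -
  interpret pde_params P p \<kappa> using assms(1,3) by unfold_locales
  show ?thesis
    using second_coeff coeff_structure[unfolded euler2_poly_def] coeff_unique top_coeff_free rhs_poly_cong
    by (intro conjI exI[of _ rhs_poly]) blast+
qed

end
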